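(* Let $m\geq1$. The filtered $\mathbb{C}$-algebra of character polynomials of $\mathbf{FI}^m$ coincides with the polynomial ring $R=\mathbb{C}[X_k^{(i)}: k\geq1,\ 1\leq i\leq m]$, where the degree of $X_k^{(i)}$ is $k\bar e^{(i)}=(0,\dots,k,\dots,0)$ ($k$ in the $i$-th coordinate).
   Context: $\mathbf{FI}$ is the category of finite sets and injections; $\mathbf{FI}^m$ has objects $m$-tuples of finite sets $\bar n=(n^{(1)},\dots,n^{(m)})$ and morphisms $m$-tuples of injections; $\bar n\leq\bar n'$ iff $|n^{(i)}|\leq|n'^{(i)}|$ for all $i$, and $\mathrm{Aut}(\bar n)=S_{\bar n}=S_{n^{(1)}}\times\cdots\times S_{n^{(m)}}$. On $S_{\bar n}$ (simultaneously for all $\bar n$), $X_k^{(i)}(\sigma^{(1)},\dots,\sigma^{(m)})$ is the number of $k$-cycles of $\sigma^{(i)}$. Character polynomials of $\mathbf{FI}^m$: for an object $\bar c$ and a conjugacy class $\mu\subseteq S_{\bar c}$ (write $|\mu|=\bar c$), let $\binom{\bar d}{\bar c}=\mathrm{Hom}(\bar c,\bar d)/S_{\bar c}$ and define the class function $\binom{X}{\mu}$ on every $S_{\bar d}$ by $\sigma\mapsto\#\{[f]\in\binom{\bar d}{\bar c}:\exists\psi\in\mu,\ \sigma f=f\psi\}$, of degree $\bar c$. A character polynomial is a $\mathbb{C}$-linear combination of such functions; it has degree $\leq\bar d$ if every $\binom{X}{\mu}$ appearing nontrivially has $|\mu|\leq\bar d$. *)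

theory Defs
  imports Complex_Main "HOL-Library.FuncSet" "HOL-Combinatorics.Permutations"
begin

text \<open>Objects of FI^m: tuples c :: nat => nat with c i = 0 for i >= m; the i-th
  finite set is {..<c i}.  Every finite set is isomorphic to such a standard one.\<close>
definition obj :: "nat \<Rightarrow> (nat \<Rightarrow> nat) set" where
  "obj m = {c. \<forall>i\<ge>m. c i = 0}"

definition Sym :: "(nat \<Rightarrow> nat) \<Rightarrow> (nat \<Rightarrow> nat \<Rightarrow> nat) set" where
  "Sym c = {\<sigma>. \<forall>i. \<sigma> i permutes {..<c i}}"

definition Dom :: "nat \<Rightarrow> ((nat \<Rightarrow> nat) \<times> (nat \<Rightarrow> nat \<Rightarrow> nat)) set" where
  "Dom m = {(n, \<sigma>). n \<in> obj m \<and> \<sigma> \<in> Sym n}"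

definition conj_class :: "(nat \<Rightarrow> nat) \<Rightarrow> (nat \<Rightarrow> nat \<Rightarrow> nat) \<Rightarrow> (nat \<Rightarrow> nat \<Rightarrow> nat) set" where
  "conj_class c \<rho> = {\<psi>. \<exists>\<tau>\<in>Sym c. \<psi> = (\<lambda>i. \<tau> i \<circ> \<rho> i \<circ> inv (\<tau> i))}"

definition conj_classes :: "(nat \<Rightarrow> nat) \<Rightarrow> (nat \<Rightarrow> nat \<Rightarrow> nat) set set" where
  "conj_classes c = {conj_class c \<rho> | \<rho>. \<rho> \<in> Sym c}"

definition Inj :: "(nat \<Rightarrow> nat) \<Rightarrow> (nat \<Rightarrow> nat) \<Rightarrow> (nat \<Rightarrow> nat \<Rightarrow> nat) set" where
  "Inj c d = {f. \<forall>i. f i \<in> {..<c i} \<rightarrow>\<^sub>E {..<d i} \<and> inj_on (f i) {..<c i}}"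

definition inj_class :: "(nat \<Rightarrow> nat) \<Rightarrow> (nat \<Rightarrow> nat \<Rightarrow> nat) \<Rightarrow> (nat \<Rightarrow> nat \<Rightarrow> nat) set" where
  "inj_class c f = {(\<lambda>i. f i \<circ> \<tau> i) | \<tau>. \<tau> \<in> Sym c}"

definition binomX :: "(nat \<Rightarrow> nat) \<Rightarrow> (nat \<Rightarrow> nat \<Rightarrow> nat) set
    \<Rightarrow> (nat \<Rightarrow> nat) \<times> (nat \<Rightarrow> nat \<Rightarrow> nat) \<Rightarrow> complex" where
  "binomX c \<mu> p = (case p of (d, \<sigma>) \<Rightarrow>
     of_nat (card {K. \<exists>f\<in>Inj c d. K = inj_class c f \<and>
        (\<exists>\<psi>\<in>\<mu>. \<forall>i. \<forall>x<c i. \<sigma> i (f i x) = f i (\<psi> i x))}))"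

definition cyc :: "(nat \<Rightarrow> nat) \<Rightarrow> nat \<Rightarrow> nat set" where
  "cyc g x = {(g ^^ j) x | j. True}"

definition num_cycles :: "nat \<Rightarrow> nat \<Rightarrow> (nat \<Rightarrow> nat) \<Rightarrow> nat" where
  "num_cycles k n g = card {C. \<exists>x<n. C = cyc g x \<and> card C = k}"

definition Xfun :: "nat \<Rightarrow> nat \<Rightarrow> (nat \<Rightarrow> nat) \<times> (nat \<Rightarrow> nat \<Rightarrow> nat) \<Rightarrow> complex" where
  "Xfun k i p = (case p of (n, \<sigma>) \<Rightarrow> of_nat (num_cycles k (n i) (\<sigma> i)))"

text \<open>Monomials of R = C[X_k^(i) : k >= 1, i < m]: exponent functions a k i, finitely supported.\<close>
definition monomials :: "nat \<Rightarrow> (nat \<Rightarrow> nat \<Rightarrow> nat) set" where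
  "monomials m = {a. finite {(k, i). a k i \<noteq> 0} \<and> (\<forall>k i. a k i \<noteq> 0 \<longrightarrow> 1 \<le> k \<and> i < m)}"

definition mono_fun :: "(nat \<Rightarrow> nat \<Rightarrow> nat) \<Rightarrow> (nat \<Rightarrow> nat) \<times> (nat \<Rightarrow> nat \<Rightarrow> nat) \<Rightarrow> complex" where
  "mono_fun a p = (\<Prod>ki\<in>{(k, i). a k i \<noteq> 0}. Xfun (fst ki) (snd ki) p ^ a (fst ki) (snd ki))"

definition mono_deg :: "(nat \<Rightarrow> nat \<Rightarrow> nat) \<Rightarrow> nat \<Rightarrow> nat" where
  "mono_deg a i = (\<Sum>k\<in>{k. a k i \<noteq> 0}. k * a k i)"

definition cspan_on :: "'a set \<Rightarrow> ('a \<Rightarrow> complex) set \<Rightarrow> ('a \<Rightarrow> complex) set" where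
  "cspan_on D A = {g. \<exists>F c. finite F \<and> F \<subseteq> A \<and> (\<forall>p\<in>D. g p = (\<Sum>f\<in>F. c f * f p))}"

definition CP_gens :: "nat \<Rightarrow> (nat \<Rightarrow> nat) \<Rightarrow> ((nat \<Rightarrow> nat) \<times> (nat \<Rightarrow> nat \<Rightarrow> nat) \<Rightarrow> complex) set" where
  "CP_gens m d = {binomX c \<mu> | c \<mu>. c \<in> obj m \<and> (\<forall>i. c i \<le> d i) \<and> \<mu> \<in> conj_classes c}"

definition CP_all_gens :: "nat \<Rightarrow> ((nat \<Rightarrow> nat) \<times> (nat \<Rightarrow> nat \<Rightarrow> nat) \<Rightarrow> complex) set" where
  "CP_all_gens m = {binomX c \<mu> | c \<mu>. c \<in> obj m \<and> \<mu> \<in> conj_classes c}"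

definition R_gens :: "nat \<Rightarrow> (nat \<Rightarrow> nat) \<Rightarrow> ((nat \<Rightarrow> nat) \<times> (nat \<Rightarrow> nat \<Rightarrow> nat) \<Rightarrow> complex) set" where
  "R_gens m d = {mono_fun a | a. a \<in> monomials m \<and> (\<forall>i<m. mono_deg a i \<le> d i)}"

definition R_all_gens :: "nat \<Rightarrow> ((nat \<Rightarrow> nat) \<times> (nat \<Rightarrow> nat \<Rightarrow> nat) \<Rightarrow> complex) set" where
  "R_all_gens m = {mono_fun a | a. a \<in> monomials m}"

end

theory Submission
  imports Defs "HOL-Combinatorics.Orbits" "HOL-Computational_Algebra.Polynomial"
begin

text \<open>
  Let \<open>\<rho> \<in> S\<^sub>c\<close> have \<open>t k i\<close> cycles of length \<open>k\<close> in its \<open>i\<close>-th component. A class \<open>[f]\<close>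
  counted by \<open>binom(X, [\<rho>])\<close> at \<open>\<sigma> \<in> S\<^sub>d\<close> is determined by the images of the \<open>f i\<close>, and these
  are exactly the \<open>\<sigma> i\<close>-invariant subsets on which \<open>\<sigma> i\<close> has the cycle type of \<open>\<rho> i\<close>: two
  permutations with the same cycle counts are intertwined by a bijection. Such a subset is a
  choice of \<open>t k i\<close> of the \<open>k\<close>-cycles of \<open>\<sigma> i\<close> for every \<open>k\<close>, hence
  \<open>binom(X, [\<rho>]) = \<Prod>\<^sub>k\<^sub>,\<^sub>i (X\<^sub>k\<^sup>(\<^sup>i\<^sup>) choose t k i)\<close>, a binomial monomial of degree \<open>c\<close>.

  Binomial monomials and ordinary monomials in the \<open>X\<^sub>k\<^sup>(\<^sup>i\<^sup>)\<close> span the same space in each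
  degree, by induction on the exponent vector using
  \<open>(r + 1) (X choose (r + 1)) = (X - r) (X choose r)\<close>; and every exponent vector is the cycle
  type of some permutation, which gives both the converse inclusion and the linear independence
  of the monomials: a vanishing combination becomes a polynomial vanishing on all of \<open>\<nat>\<^sup>V\<close>.
\<close>

section \<open>Cycles of a permutation on an invariant set\<close>

definition cycles_of_length :: "nat \<Rightarrow> nat set \<Rightarrow> (nat \<Rightarrow> nat) \<Rightarrow> nat set set" where
  "cycles_of_length k A g = {C. \<exists>x\<in>A. C = cyc g x \<and> card C = k}"

definition ncycles :: "nat \<Rightarrow> nat set \<Rightarrow> (nat \<Rightarrow> nat) \<Rightarrow> nat" where
  "ncycles k A g = card (cycles_of_length k A g)"

lemma num_cycles_eq_ncycles: "num_cycles k n g = ncycles k {..<n} g"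
  unfolding num_cycles_def ncycles_def cycles_of_length_def by (auto intro!: arg_cong[where f=card])

lemma cyc_eq_orbit: "permutation g \<Longrightarrow> cyc g x = orbit g x"
  unfolding cyc_def by (simp add: orbit_altdef_permutation)

lemma funpow_in_cyc: "(g ^^ j) x \<in> cyc g x"
  unfolding cyc_def by auto

lemma self_in_cyc: "x \<in> cyc g x"
  using funpow_in_cyc[of 0] by simp

lemma apply_in_cyc: "y \<in> cyc g x \<Longrightarrow> g y \<in> cyc g x"
  unfolding cyc_def by (auto intro: exI[of _ "Suc j" for j])

lemma finite_cyc: "permutation g \<Longrightarrow> finite (cyc g x)"
  by (simp add: cyc_eq_orbit finite_orbit permutation_self_in_orbit)

lemma card_cyc_pos: "permutation g \<Longrightarrow> card (cyc g x) > 0"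
  using finite_cyc self_in_cyc by (metis card_gt_0_iff empty_iff)

lemma funpow_eq_iff_mod_card_cyc:
  assumes "permutation g"
  shows "(g ^^ a) x = (g ^^ b) x \<longleftrightarrow> a mod card (cyc g x) = b mod card (cyc g x)"
proof -
  have x: "x \<in> orbit g x" using assms by (rule permutation_self_in_orbit)
  have card: "card (cyc g x) = funpow_dist1 g x x"
    unfolding cyc_eq_orbit[OF assms] orbit_conv_funpow_dist1[OF x]
    using inj_on_funpow_dist1[OF x] card_image by fastforce
  have period: "(g ^^ n) x = (g ^^ (n mod card (cyc g x))) x" for n
    using funpow_mod_eq[of "card (cyc g x)" g x] card funpow_dist1_prop[OF x] by metis
  have "inj_on (\<lambda>n. (g ^^ n) x) {0..<card (cyc g x)}"
    using inj_on_funpow_dist1[OF x] card by simp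
  then show ?thesis
    using period[of a] period[of b] card_cyc_pos[OF assms, of x] by (auto dest: inj_onD)
qed

lemma cyc_eq_cyc:
  assumes "permutation g" and "y \<in> cyc g x"
  shows "cyc g y = cyc g x"
proof -
  have y: "y \<in> orbit g x" using assms cyc_eq_orbit by simp
  have "x \<in> orbit g y" using orbit_swap[OF permutation_self_in_orbit[OF assms(1)] y] .
  then show ?thesis using y unfolding cyc_eq_orbit[OF assms(1)] by (auto intro: orbit_trans)
qed

lemma funpow_mem_invariant: "g ` A \<subseteq> A \<Longrightarrow> x \<in> A \<Longrightarrow> (g ^^ j) x \<in> A"
  by (induct j) auto

lemma cyc_subset: "g ` A \<subseteq> A \<Longrightarrow> x \<in> A \<Longrightarrow> cyc g x \<subseteq> A"
  unfolding cyc_def using funpow_mem_invariant[of g A x] by blast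

lemma cyc_cong:
  assumes "g ` A \<subseteq> A" "\<forall>z\<in>A. g z = g' z" "x \<in> A"
  shows "cyc g x = cyc g' x"
proof -
  have "(g ^^ j) x = (g' ^^ j) x" for j
  proof (induct j)
    case (Suc j)
    then show ?case using funpow_mem_invariant[OF assms(1,3), of j] assms(2) by simp
  qed simp
  then show ?thesis unfolding cyc_def by simp
qed

lemma cyc_intertwine:
  assumes "\<rho> ` A \<subseteq> A" "\<forall>z\<in>A. \<sigma> (h z) = h (\<rho> z)" "x \<in> A"
  shows "cyc \<sigma> (h x) = h ` cyc \<rho> x"
proof -
  have "(\<sigma> ^^ j) (h x) = h ((\<rho> ^^ j) x)" for j
  proof (induct j)
    case (Suc j)
    then show ?case using funpow_mem_invariant[OF assms(1,3)] assms(2) by simp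
  qed simp
  then show ?thesis unfolding cyc_def by auto
qed

lemma Diff_cyc_image_subset:
  assumes g: "permutation g" and A: "g ` A \<subseteq> A"
  shows "g ` (A - cyc g x) \<subseteq> A - cyc g x"
proof -
  have "g z \<notin> cyc g x" if "z \<notin> cyc g x" for z
  proof
    assume "g z \<in> cyc g x"
    then have "cyc g (g z) = cyc g x" using cyc_eq_cyc[OF g] by blast
    moreover have "cyc g (g z) = cyc g z"
      using g by (simp add: cyc_eq_orbit permutation_orbit_step)
    ultimately show False using that self_in_cyc by blast
  qed
  then show ?thesis using A by blast
qed

lemma finite_cycles_of_length: "finite A \<Longrightarrow> finite (cycles_of_length k A g)"
  unfolding cycles_of_length_def by (rule finite_subset[of _ "cyc g ` A"]) auto

lemma ncycles_Diff_cyc: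
  assumes g: "permutation g" and A: "finite A" "g ` A \<subseteq> A" "x \<in> A"
  shows "ncycles k A g = ncycles k (A - cyc g x) g + (if card (cyc g x) = k then 1 else 0)"
proof -
  let ?C = "cyc g x"
  have "cycles_of_length k A g
      = cycles_of_length k (A - ?C) g \<union> (if card ?C = k then {?C} else {})"
  proof (intro set_eqI iffI)
    fix D assume "D \<in> cycles_of_length k A g"
    then obtain z where z: "z \<in> A" "D = cyc g z" "card D = k"
      unfolding cycles_of_length_def by auto
    then show "D \<in> cycles_of_length k (A - ?C) g \<union> (if card ?C = k then {?C} else {})"
      using cyc_eq_cyc[OF g, of z x] unfolding cycles_of_length_def by (cases "z \<in> ?C") auto
  qed (use A(3) in \<open>auto simp: cycles_of_length_def split: if_splits\<close>)
  moreover have "?C \<notin> cycles_of_length k (A - ?C) g"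
    unfolding cycles_of_length_def using self_in_cyc by blast
  ultimately show ?thesis
    unfolding ncycles_def using finite_cycles_of_length[of "A - ?C" k g] A(1)
    by (simp add: card_insert_if)
qed

lemma ncycles_eq_0:
  assumes g: "permutation g" and A: "finite A" "g ` A \<subseteq> A" and k: "k = 0 \<or> card A < k"
  shows "ncycles k A g = 0"
proof -
  have "card (cyc g z) \<noteq> k" if "z \<in> A" for z
    using card_mono[OF A(1) cyc_subset[OF A(2) that]] card_cyc_pos[OF g, of z] k by linarith
  then have "cycles_of_length k A g = {}"
    unfolding cycles_of_length_def by blast
  then show ?thesis unfolding ncycles_def by simp
qed

lemma ncycles_image:
  assumes "\<rho> ` A \<subseteq> A" "inj_on h A" "\<forall>z\<in>A. \<sigma> (h z) = h (\<rho> z)"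
  shows "ncycles k (h ` A) \<sigma> = ncycles k A \<rho>"
proof -
  have sub: "C \<subseteq> A" if "C \<in> cycles_of_length k A \<rho>" for C
    using that cyc_subset[OF assms(1)] unfolding cycles_of_length_def by auto
  have card: "card (h ` cyc \<rho> z) = card (cyc \<rho> z)" if "z \<in> A" for z
    using card_image inj_on_subset[OF assms(2) cyc_subset[OF assms(1) that]] by blast
  have "cycles_of_length k (h ` A) \<sigma> = (\<lambda>C. h ` C) ` cycles_of_length k A \<rho>"
    unfolding cycles_of_length_def using cyc_intertwine[OF assms(1,3)] card by fastforce
  moreover have "inj_on (\<lambda>C. h ` C) (cycles_of_length k A \<rho>)"
    using sub assms(2) by (auto intro!: inj_onI simp: inj_on_image_eq_iff)
  ultimately show ?thesis unfolding ncycles_def by (simp add: card_image)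
qed

lemma ncycles_empty [simp]: "ncycles k {} g = 0"
  unfolding ncycles_def cycles_of_length_def by simp

lemma ncycles_card_cyc_pos: "finite A \<Longrightarrow> y \<in> A \<Longrightarrow> ncycles (card (cyc g y)) A g > 0"
  unfolding ncycles_def using finite_cycles_of_length card_gt_0_iff
  by (fastforce simp: cycles_of_length_def)

lemma sum_ncycles:
  assumes g: "permutation g"
  shows "finite A \<Longrightarrow> g ` A \<subseteq> A \<Longrightarrow> card A \<le> N \<Longrightarrow> (\<Sum>k\<in>{1..N}. k * ncycles k A g) = card A"
proof (induct "card A" arbitrary: A rule: less_induct)
  case less
  show ?case
  proof (cases "A = {}")
    case False
    then obtain x where x: "x \<in> A" by auto
    define C where "C = cyc g x"
    have "C \<subseteq> A" using cyc_subset[OF less(3) x] C_def by simp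
    then have cA: "card A = card (A - C) + card C"
      using less(2) by (metis card_Diff_subset card_mono finite_subset le_add_diff_inverse2)
    have C: "card C \<in> {1..N}" using card_cyc_pos[OF g, of x] cA less(4) C_def by simp
    have "(\<Sum>k\<in>{1..N}. k * ncycles k A g)
        = (\<Sum>k\<in>{1..N}. k * ncycles k (A - C) g + (if k = card C then k else 0))"
      using ncycles_Diff_cyc[OF g less(2,3) x] C_def by (intro sum.cong) auto
    also have "\<dots> = card (A - C) + card C"
      using less(1)[of "A - C"] less(2,4) cA C card_cyc_pos[OF g, of x]
        Diff_cyc_image_subset[OF g less(3)] C_def by (simp add: sum.distrib)
    finally show ?thesis using cA by simp
  qed simp
qed

lemma cyc_intertwining_bij:
  assumes \<rho>: "permutation \<rho>" and \<sigma>: "permutation \<sigma>" and k: "card (cyc \<sigma> y) = card (cyc \<rho> x)"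
  obtains h where "bij_betw h (cyc \<rho> x) (cyc \<sigma> y)" "\<forall>z\<in>cyc \<rho> x. \<sigma> (h z) = h (\<rho> z)"
proof -
  define h where "h z = (\<sigma> ^^ funpow_dist \<rho> x z) y" for z
  have mod_eq: "(\<rho> ^^ i) x = (\<rho> ^^ j) x \<longleftrightarrow> (\<sigma> ^^ i) y = (\<sigma> ^^ j) y" for i j
    using funpow_eq_iff_mod_card_cyc[OF \<rho>] funpow_eq_iff_mod_card_cyc[OF \<sigma>] k by simp
  have h_funpow: "h ((\<rho> ^^ j) x) = (\<sigma> ^^ j) y" for j
  proof -
    have "(\<rho> ^^ j) x \<in> orbit \<rho> x" using funpow_in_cyc cyc_eq_orbit[OF \<rho>] by metis
    then show ?thesis unfolding h_def using funpow_dist_prop mod_eq by metis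
  qed
  have cyc_\<rho>: "cyc \<rho> x = range (\<lambda>j. (\<rho> ^^ j) x)" and cyc_\<sigma>: "cyc \<sigma> y = range (\<lambda>j. (\<sigma> ^^ j) y)"
    unfolding cyc_def by auto
  have "bij_betw h (cyc \<rho> x) (cyc \<sigma> y)"
    unfolding bij_betw_def inj_on_def cyc_\<rho> cyc_\<sigma> using h_funpow mod_eq by (auto simp: image_iff)
  moreover have "\<sigma> (h z) = h (\<rho> z)" if z: "z \<in> cyc \<rho> x" for z
  proof -
    obtain j where "z = (\<rho> ^^ j) x" using z[unfolded cyc_\<rho>] by blast
    then show ?thesis using h_funpow[of j] h_funpow[of "Suc j"] by simp
  qed
  ultimately show thesis using that by blast
qed

lemma intertwining_bij_if_ncycles_eq:
  assumes \<rho>: "permutation \<rho>" and \<sigma>: "permutation \<sigma>"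
  shows "finite A \<Longrightarrow> \<rho> ` A \<subseteq> A \<Longrightarrow> finite B \<Longrightarrow> \<sigma> ` B \<subseteq> B \<Longrightarrow> (\<forall>k. ncycles k A \<rho> = ncycles k B \<sigma>)
     \<Longrightarrow> \<exists>h. bij_betw h A B \<and> (\<forall>z\<in>A. \<sigma> (h z) = h (\<rho> z))"
proof (induct "card A" arbitrary: A B rule: less_induct)
  case less
  show ?case
  proof (cases "A = {}")
    case True
    have "B = {}"
      using ncycles_card_cyc_pos[OF less(4)] less(6) True by (metis less_irrefl ncycles_empty ex_in_conv)
    then show ?thesis using True by auto
  next
    case False
    then obtain x where x: "x \<in> A" by auto
    define C where "C = cyc \<rho> x"
    have "ncycles (card C) B \<sigma> > 0"
      using ncycles_card_cyc_pos[OF less(2) x, of \<rho>] less(6) C_def by simp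
    then obtain y where y: "y \<in> B" "card (cyc \<sigma> y) = card C"
      unfolding ncycles_def cycles_of_length_def by (auto simp: card_gt_0_iff)
    define D where "D = cyc \<sigma> y"
    obtain h1 where h1: "bij_betw h1 C D" "\<forall>z\<in>C. \<sigma> (h1 z) = h1 (\<rho> z)"
      using cyc_intertwining_bij[OF \<rho> \<sigma>] y(2) C_def D_def by metis
    have "ncycles k (A - C) \<rho> = ncycles k (B - D) \<sigma>" for k
      using ncycles_Diff_cyc[OF \<rho> less(2,3) x, of k] ncycles_Diff_cyc[OF \<sigma> less(4,5) y(1), of k]
        less(6) y(2) C_def D_def by simp
    moreover have "card (A - C) < card A"
      using x self_in_cyc less(2) C_def by (intro psubset_card_mono) auto
    ultimately obtain h2 where h2: "bij_betw h2 (A - C) (B - D)" "\<forall>z\<in>A - C. \<sigma> (h2 z) = h2 (\<rho> z)"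
      using less(1) less(2,4) Diff_cyc_image_subset[OF \<rho> less(3)] Diff_cyc_image_subset[OF \<sigma> less(5)]
        C_def D_def by (metis finite_Diff)
    define h where "h z = (if z \<in> C then h1 z else h2 z)" for z
    have CA: "C \<subseteq> A" and DB: "D \<subseteq> B"
      using cyc_subset less(3,5) x y(1) C_def D_def by auto
    have "bij_betw h C D"
      using h1(1) by (rule bij_betw_cong[THEN iffD1, rotated]) (simp add: h_def)
    moreover have "bij_betw h (A - C) (B - D)"
      using h2(1) by (rule bij_betw_cong[THEN iffD1, rotated]) (simp add: h_def)
    ultimately have "bij_betw h (C \<union> (A - C)) (D \<union> (B - D))"
      by (rule bij_betw_combine) simp
    then have "bij_betw h A B" using CA DB by (simp add: Un_absorb1 Un_Diff_cancel)
    moreover have "\<sigma> (h z) = h (\<rho> z)" if "z \<in> A" for z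
      using h1(2) h2(2) that apply_in_cyc[of z \<rho> x] Diff_cyc_image_subset[OF \<rho> less(3), of x]
      unfolding h_def C_def by auto
    ultimately show ?thesis by blast
  qed
qed

section \<open>Permutations with prescribed cycle counts\<close>

definition add_cycle :: "(nat \<Rightarrow> nat) \<Rightarrow> nat \<Rightarrow> nat \<Rightarrow> nat \<Rightarrow> nat" where
  "add_cycle \<rho> n k x = (if x < n then \<rho> x else if x < n + k then n + (x - n + 1) mod k else x)"

lemma funpow_add_cycle: "0 < k \<Longrightarrow> (add_cycle \<rho> n k ^^ j) n = n + j mod k"
  by (induct j) (simp_all add: add_cycle_def mod_Suc_eq)

lemma cyc_add_cycle:
  assumes "0 < k"
  shows "cyc (add_cycle \<rho> n k) n = {n..<n+k}"
proof (intro set_eqI iffI)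
  fix z assume "z \<in> {n..<n+k}"
  then have "z = (add_cycle \<rho> n k ^^ (z - n)) n" using funpow_add_cycle[OF assms] by auto
  then show "z \<in> cyc (add_cycle \<rho> n k) n" using funpow_in_cyc by metis
qed (use assms funpow_add_cycle in \<open>auto simp: cyc_def\<close>)

lemma add_cycle_permutes:
  assumes \<rho>: "\<rho> permutes {..<n}" and k: "0 < k"
  shows "add_cycle \<rho> n k permutes {..<n+k}"
proof -
  let ?r = "add_cycle \<rho> n k"
  have "bij_betw ?r {..<n} {..<n}"
    using permutes_imp_bij[OF \<rho>] by (rule bij_betw_cong[THEN iffD1, rotated]) (simp add: add_cycle_def)
  moreover have "bij_betw ?r {n..<n+k} {n..<n+k}"
  proof -
    have "inj_on ?r {n..<n+k}"
    proof (rule inj_onI)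
      fix x y assume x: "x \<in> {n..<n+k}" and y: "y \<in> {n..<n+k}" and "?r x = ?r y"
      then have "Suc (x - n) mod k = Suc (y - n) mod k" by (simp add: add_cycle_def)
      with x y show "x = y" by (auto simp: mod_Suc split: if_splits)
    qed
    moreover have "?r ` {n..<n+k} \<subseteq> {n..<n+k}" using k by (auto simp: add_cycle_def)
    ultimately show ?thesis using endo_inj_surj[of "{n..<n+k}" ?r] by (simp add: bij_betw_def)
  qed
  ultimately have "bij_betw ?r ({..<n} \<union> {n..<n+k}) ({..<n} \<union> {n..<n+k})"
    by (rule bij_betw_combine) auto
  moreover have "{..<n} \<union> {n..<n+k} = {..<n+k}" by auto
  ultimately show ?thesis by (intro bij_imp_permutes) (simp_all add: add_cycle_def)
qed

lemma ncycles_add_cycle: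
  assumes \<rho>: "\<rho> permutes {..<n}" and k: "0 < k"
  shows "ncycles j {..<n+k} (add_cycle \<rho> n k) = ncycles j {..<n} \<rho> + (if j = k then 1 else 0)"
proof -
  let ?r = "add_cycle \<rho> n k"
  have r: "?r permutes {..<n+k}" by (rule add_cycle_permutes[OF \<rho> k])
  have "ncycles j {..<n+k} ?r
      = ncycles j ({..<n+k} - cyc ?r n) ?r + (if card (cyc ?r n) = j then 1 else 0)"
    by (rule ncycles_Diff_cyc[OF permutes_imp_permutation[OF _ r]]) (simp_all add: permutes_image[OF r] k)
  also have "{..<n+k} - cyc ?r n = {..<n}" using cyc_add_cycle[OF k] by auto
  also have "card (cyc ?r n) = k" using cyc_add_cycle[OF k] by simp
  finally have "ncycles j {..<n+k} ?r = ncycles j {..<n} ?r + (if j = k then 1 else 0)"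
    by auto
  moreover have "\<forall>z\<in>{..<n}. \<rho> z = ?r z" by (simp add: add_cycle_def)
  then have "cyc \<rho> x = cyc ?r x" if "x < n" for x
    using cyc_cong[OF equalityD1[OF permutes_image[OF \<rho>]]] that by blast
  then have "cycles_of_length j {..<n} ?r = cycles_of_length j {..<n} \<rho>"
    unfolding cycles_of_length_def by auto
  ultimately show ?thesis unfolding ncycles_def by simp
qed

lemma exists_permutation_with_ncycles:
  assumes "\<forall>k. t k \<noteq> 0 \<longrightarrow> 1 \<le> k \<and> k \<le> N"
  shows "\<exists>n \<rho>. \<rho> permutes {..<n} \<and> (\<forall>k. ncycles k {..<n} \<rho> = t k)"
  using assms
proof (induct "sum t {1..N}" arbitrary: t)
  case 0
  from 0(1) have "\<forall>k\<in>{1..N}. t k = 0" by simp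
  then have "t k = 0" for k using 0(2) by (metis atLeastAtMost_iff)
  then show ?case by (intro exI[of _ 0] exI[of _ id]) (simp add: permutes_id id_def)
next
  case (Suc M)
  obtain k0 where k0: "k0 \<in> {1..N}" "t k0 \<noteq> 0"
    using sum.neutral[of "{1..N}" t] Suc(2) by (metis nat.distinct(1))
  define t' where "t' = t(k0 := t k0 - 1)"
  have "sum t {1..N} = Suc (sum t' {1..N})"
    using k0 sum.remove[of "{1..N}" k0 t] sum.remove[of "{1..N}" k0 t']
    by (simp add: t'_def)
  moreover have "\<forall>k. t' k \<noteq> 0 \<longrightarrow> 1 \<le> k \<and> k \<le> N" using Suc(3) by (simp add: t'_def)
  ultimately obtain n \<rho> where \<rho>: "\<rho> permutes {..<n}" "\<forall>k. ncycles k {..<n} \<rho> = t' k"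
    using Suc(1)[of t'] Suc(2) by auto
  have "ncycles k {..<n+k0} (add_cycle \<rho> n k0) = t k" for k
    using ncycles_add_cycle[OF \<rho>(1), of k0 k] \<rho>(2) k0 by (simp add: t'_def)
  then show ?case using add_cycle_permutes[OF \<rho>(1), of k0] k0 by auto
qed

section \<open>Counting invariant subsets of a given cycle type\<close>

lemma Union_cycles_of_length:
  assumes \<sigma>: "permutation \<sigma>" and S: "finite S" "\<sigma> ` S \<subseteq> S" "card S \<le> N"
  shows "(\<Union>k\<in>{1..N}. \<Union>(cycles_of_length k S \<sigma>)) = S"
proof (intro equalityI subsetI)
  fix z assume z: "z \<in> S"
  have "card (cyc \<sigma> z) \<in> {1..N}"
    using card_cyc_pos[OF \<sigma>, of z] card_mono[OF S(1) cyc_subset[OF S(2) z]] S(3) by simp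
  moreover have "cyc \<sigma> z \<in> cycles_of_length (card (cyc \<sigma> z)) S \<sigma>"
    unfolding cycles_of_length_def using z by blast
  ultimately show "z \<in> (\<Union>k\<in>{1..N}. \<Union>(cycles_of_length k S \<sigma>))"
    using self_in_cyc[of z \<sigma>] by blast
next
  fix z assume "z \<in> (\<Union>k\<in>{1..N}. \<Union>(cycles_of_length k S \<sigma>))"
  then obtain x where "x \<in> S" "z \<in> cyc \<sigma> x" unfolding cycles_of_length_def by blast
  then show "z \<in> S" using cyc_subset[OF S(2)] by blast
qed

lemma cycles_of_length_Union:
  assumes \<sigma>: "permutation \<sigma>" and Q: "\<forall>k\<in>K. Q k \<subseteq> cycles_of_length k B \<sigma>" and k: "k \<in> K"
  shows "cycles_of_length k (\<Union>k\<in>K. \<Union>(Q k)) \<sigma> = Q k"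
proof -
  have cyc: "cyc \<sigma> z = C \<and> card C = k'" if C: "k' \<in> K" "C \<in> Q k'" "z \<in> C" for k' C z
  proof -
    obtain x where "C = cyc \<sigma> x" "card C = k'"
      using Q C(1,2) unfolding cycles_of_length_def by blast
    then show ?thesis using cyc_eq_cyc[OF \<sigma>] C(3) by simp
  qed
  show ?thesis
  proof (intro set_eqI iffI)
    fix C assume "C \<in> cycles_of_length k (\<Union>k\<in>K. \<Union>(Q k)) \<sigma>"
    then obtain k' C' z where C': "k' \<in> K" "C' \<in> Q k'" "z \<in> C'" and "C = cyc \<sigma> z" "card C = k"
      unfolding cycles_of_length_def by blast
    then show "C \<in> Q k" using cyc[OF C'] by simp
  next
    fix C assume C: "C \<in> Q k"
    then obtain x where "C = cyc \<sigma> x" using Q k unfolding cycles_of_length_def by blast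
    then have "x \<in> C" using self_in_cyc by simp
    then have "x \<in> (\<Union>k\<in>K. \<Union>(Q k))" "cyc \<sigma> x = C \<and> card C = k"
      using k C cyc[OF k C] by auto
    then show "C \<in> cycles_of_length k (\<Union>k\<in>K. \<Union>(Q k)) \<sigma>"
      unfolding cycles_of_length_def by blast
  qed
qed

lemma Union_cycle_choice:
  assumes \<sigma>: "permutation \<sigma>" and B: "finite B" "\<sigma> ` B \<subseteq> B" "card B \<le> N"
    and t: "\<forall>k. t k \<noteq> 0 \<longrightarrow> 1 \<le> k \<and> k \<le> N"
    and Q: "\<forall>k\<in>{1..N}. Q k \<subseteq> cycles_of_length k B \<sigma> \<and> card (Q k) = t k"
  defines "U \<equiv> \<Union>k\<in>{1..N}. \<Union>(Q k)"
  shows "U \<subseteq> B" "\<sigma> ` U \<subseteq> U" "ncycles k U \<sigma> = t k"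
proof -
  have Qk: "\<forall>k\<in>{1..N}. Q k \<subseteq> cycles_of_length k B \<sigma>" using Q by blast
  show UB: "U \<subseteq> B"
    using Qk cyc_subset[OF B(2)] unfolding U_def cycles_of_length_def by blast
  show inv: "\<sigma> ` U \<subseteq> U"
  proof (rule image_subsetI)
    fix z assume "z \<in> U"
    then obtain k C where C: "k \<in> {1..N}" "C \<in> Q k" "z \<in> C" unfolding U_def by blast
    then obtain x where "C = cyc \<sigma> x" using Qk unfolding cycles_of_length_def by blast
    then show "\<sigma> z \<in> U" using C apply_in_cyc unfolding U_def by blast
  qed
  show "ncycles k U \<sigma> = t k"
  proof (cases "k \<in> {1..N}")
    case True
    then have "card (Q k) = t k" using Q by blast
    then show ?thesis
      using cycles_of_length_Union[OF \<sigma> Qk True] unfolding U_def ncycles_def by simp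
  next
    case False
    then have "k = 0 \<or> card U < k" using card_mono[OF B(1) UB] B(3) by auto
    then have "ncycles k U \<sigma> = 0" by (rule ncycles_eq_0[OF \<sigma> finite_subset[OF UB B(1)] inv])
    moreover have "t k = 0" using t False by (metis atLeastAtMost_iff)
    ultimately show ?thesis by simp
  qed
qed

lemma card_invariant_subsets_with_ncycles:
  assumes \<sigma>: "permutation \<sigma>" and B: "finite B" "\<sigma> ` B \<subseteq> B" "card B \<le> N"
    and t: "\<forall>k. t k \<noteq> 0 \<longrightarrow> 1 \<le> k \<and> k \<le> N"
  shows "card {S. S \<subseteq> B \<and> \<sigma> ` S \<subseteq> S \<and> (\<forall>k. ncycles k S \<sigma> = t k)}
    = (\<Prod>k\<in>{1..N}. ncycles k B \<sigma> choose t k)"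
proof -
  define SS where "SS = {S. S \<subseteq> B \<and> \<sigma> ` S \<subseteq> S \<and> (\<forall>k. ncycles k S \<sigma> = t k)}"
  define QQ where "QQ = Pi\<^sub>E {1..N} (\<lambda>k. {Q. Q \<subseteq> cycles_of_length k B \<sigma> \<and> card Q = t k})"
  define cycles where "cycles S = (\<lambda>k\<in>{1..N}. cycles_of_length k S \<sigma>)" for S
  define union where "union Q = (\<Union>k\<in>{1..N}. \<Union>(Q k))" for Q :: "nat \<Rightarrow> nat set set"
  have sub: "cycles_of_length k S \<sigma> \<subseteq> cycles_of_length k B \<sigma>" if "S \<subseteq> B" for S k
    using that unfolding cycles_of_length_def by blast
  have QQ: "\<forall>k\<in>{1..N}. Q k \<subseteq> cycles_of_length k B \<sigma>" if "Q \<in> QQ" for Q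
    using that unfolding QQ_def by auto
  have "bij_betw cycles SS QQ"
  proof (rule bij_betw_byWitness[where f' = union])
    show "\<forall>S\<in>SS. union (cycles S) = S"
    proof
      fix S assume "S \<in> SS"
      then have "S \<subseteq> B" "\<sigma> ` S \<subseteq> S" unfolding SS_def by auto
      moreover have "card S \<le> N" using card_mono[OF B(1) \<open>S \<subseteq> B\<close>] B(3) by simp
      ultimately have "(\<Union>k\<in>{1..N}. \<Union>(cycles_of_length k S \<sigma>)) = S"
        using Union_cycles_of_length[OF \<sigma> finite_subset[OF _ B(1)]] by blast
      then show "union (cycles S) = S" unfolding union_def cycles_def by simp
    qed
    show "cycles ` SS \<subseteq> QQ"
    proof clarify
      fix S assume "S \<in> SS"
      then show "cycles S \<in> QQ" unfolding SS_def QQ_def cycles_def ncycles_def using sub[of S] by simp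
    qed
    show "\<forall>Q\<in>QQ. cycles (union Q) = Q"
    proof (intro ballI ext)
      fix Q k assume Q: "Q \<in> QQ"
      show "cycles (union Q) k = Q k"
      proof (cases "k \<in> {1..N}")
        case True
        then show ?thesis
          using cycles_of_length_Union[OF \<sigma> QQ[OF Q] True] unfolding cycles_def union_def by simp
      next
        case False
        then show ?thesis using PiE_arb[OF Q[unfolded QQ_def] False] unfolding cycles_def by auto
      qed
    qed
    show "union ` QQ \<subseteq> SS"
    proof clarify
      fix Q assume "Q \<in> QQ"
      then have "\<forall>k\<in>{1..N}. Q k \<subseteq> cycles_of_length k B \<sigma> \<and> card (Q k) = t k"
        unfolding QQ_def by auto
      from Union_cycle_choice[OF \<sigma> B t this]
      show "union Q \<in> SS" unfolding SS_def union_def by simp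
    qed
  qed
  then have "card SS = card QQ" by (rule bij_betw_same_card)
  also have "\<dots> = (\<Prod>k\<in>{1..N}. ncycles k B \<sigma> choose t k)"
    unfolding QQ_def ncycles_def using finite_cycles_of_length[OF B(1)]
    by (simp add: card_PiE n_subsets)
  finally show ?thesis unfolding SS_def .
qed

section \<open>Character polynomials as products of binomial coefficients\<close>

lemma Sym_permutes: "\<tau> \<in> Sym c \<Longrightarrow> \<tau> i permutes {..<c i}"
  unfolding Sym_def by simp

lemma Sym_id: "(\<lambda>i. id) \<in> Sym c"
  unfolding Sym_def by (simp add: permutes_id)

lemma permutes_image_subset: "p permutes A \<Longrightarrow> p ` A \<subseteq> A"
  using permutes_image by blast

lemma ncycles_conj_class:
  assumes \<rho>: "\<rho> \<in> Sym c" and \<psi>: "\<psi> \<in> conj_class c \<rho>"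
  shows "\<psi> i permutes {..<c i}" "ncycles k {..<c i} (\<psi> i) = ncycles k {..<c i} (\<rho> i)"
proof -
  obtain \<tau> where \<tau>: "\<tau> \<in> Sym c" "\<psi> = (\<lambda>i. \<tau> i \<circ> \<rho> i \<circ> inv (\<tau> i))"
    using \<psi> unfolding conj_class_def by blast
  have \<tau>i: "\<tau> i permutes {..<c i}" and \<rho>i: "\<rho> i permutes {..<c i}"
    using Sym_permutes \<tau>(1) \<rho> by auto
  show "\<psi> i permutes {..<c i}"
    unfolding \<tau>(2) by (intro permutes_compose permutes_inv \<tau>i \<rho>i)
  have "\<forall>z\<in>{..<c i}. \<psi> i (\<tau> i z) = \<tau> i (\<rho> i z)"
    unfolding \<tau>(2) using permutes_inj[OF \<tau>i] by (simp add: inv_f_f)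
  then have "ncycles k (\<tau> i ` {..<c i}) (\<psi> i) = ncycles k {..<c i} (\<rho> i)"
    using ncycles_image permutes_image_subset[OF \<rho>i] permutes_inj_on[OF \<tau>i] by blast
  then show "ncycles k {..<c i} (\<psi> i) = ncycles k {..<c i} (\<rho> i)"
    using permutes_image[OF \<tau>i] by simp
qed

lemma Inj_image_subset: "f \<in> Inj c d \<Longrightarrow> f i ` {..<c i} \<subseteq> {..<d i}"
  unfolding Inj_def by (auto simp: PiE_def Pi_def)

lemma Inj_inj_on: "f \<in> Inj c d \<Longrightarrow> inj_on (f i) {..<c i}"
  unfolding Inj_def by simp

lemma self_in_inj_class: "f \<in> inj_class c f"
  unfolding inj_class_def using Sym_id[of c] by (intro CollectI exI[of _ "\<lambda>i. id"]) simp

lemma image_in_inj_class: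
  assumes "g \<in> inj_class c f"
  shows "g i ` {..<c i} = f i ` {..<c i}"
proof -
  obtain \<tau> where \<tau>: "\<tau> \<in> Sym c" "g = (\<lambda>i. f i \<circ> \<tau> i)"
    using assms unfolding inj_class_def by blast
  then have "g i ` {..<c i} = f i ` (\<tau> i ` {..<c i})" by (simp add: image_image)
  then show ?thesis using permutes_image[OF Sym_permutes[OF \<tau>(1)]] by simp
qed

lemma Union_image_inj_class: "(\<Union>g\<in>inj_class c f. g i ` {..<c i}) = f i ` {..<c i}"
  using self_in_inj_class image_in_inj_class by blast

lemma inj_class_eq:
  assumes "g \<in> inj_class c f"
  shows "inj_class c g = inj_class c f"
proof -
  obtain \<tau> where \<tau>: "\<tau> \<in> Sym c" "g = (\<lambda>i. f i \<circ> \<tau> i)"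
    using assms unfolding inj_class_def by blast
  have \<tau>i: "\<tau> i permutes {..<c i}" for i using Sym_permutes[OF \<tau>(1)] .
  have comp: "(\<lambda>i. \<tau> i \<circ> \<tau>' i) \<in> Sym c" and comp_inv: "(\<lambda>i. inv (\<tau> i) \<circ> \<tau>' i) \<in> Sym c"
    if "\<tau>' \<in> Sym c" for \<tau>'
    using \<tau>i Sym_permutes[OF that] unfolding Sym_def by (auto intro: permutes_compose permutes_inv)
  have f_comp: "(\<lambda>i. f i \<circ> \<tau>' i) = (\<lambda>i. g i \<circ> (inv (\<tau> i) \<circ> \<tau>' i))" for \<tau>'
    unfolding \<tau>(2) by (simp add: fun_eq_iff surj_f_inv_f[OF permutes_surj[OF \<tau>i]])
  have g_comp: "(\<lambda>i. g i \<circ> \<tau>' i) = (\<lambda>i. f i \<circ> (\<tau> i \<circ> \<tau>' i))" for \<tau>'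
    unfolding \<tau>(2) by (simp add: comp_assoc)
  show ?thesis
  proof (intro set_eqI iffI)
    fix h assume "h \<in> inj_class c g"
    then obtain \<tau>' where \<tau>': "\<tau>' \<in> Sym c" "h = (\<lambda>i. g i \<circ> \<tau>' i)"
      unfolding inj_class_def by blast
    show "h \<in> inj_class c f"
      unfolding inj_class_def \<tau>'(2) g_comp
      by (rule CollectI, rule exI[of _ "\<lambda>i. \<tau> i \<circ> \<tau>' i"]) (simp add: comp[OF \<tau>'(1)])
  next
    fix h assume "h \<in> inj_class c f"
    then obtain \<tau>' where \<tau>': "\<tau>' \<in> Sym c" "h = (\<lambda>i. f i \<circ> \<tau>' i)"
      unfolding inj_class_def by blast
    show "h \<in> inj_class c g"
      unfolding inj_class_def \<tau>'(2) f_comp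
      by (rule CollectI, rule exI[of _ "\<lambda>i. inv (\<tau> i) \<circ> \<tau>' i"]) (simp add: comp_inv[OF \<tau>'(1)])
  qed
qed

lemma mem_inj_class_if_image_eq:
  assumes f: "f \<in> Inj c d" and g: "g \<in> Inj c d" and im: "\<forall>i. f i ` {..<c i} = g i ` {..<c i}"
  shows "g \<in> inj_class c f"
proof -
  define \<tau> where "\<tau> i x = (if x < c i then the_inv_into {..<c i} (f i) (g i x) else x)" for i x
  have \<tau>: "\<tau> i x < c i \<and> f i (\<tau> i x) = g i x" if x: "x < c i" for i x
  proof -
    have gx: "g i x \<in> f i ` {..<c i}" using im x by blast
    show ?thesis
      unfolding \<tau>_def using x the_inv_into_into[OF Inj_inj_on[OF f] gx subset_refl]
        f_the_inv_into_f[OF Inj_inj_on[OF f] gx] by simp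
  qed
  have "\<tau> i permutes {..<c i}" for i
  proof -
    have "inj_on (\<tau> i) {..<c i}"
    proof (rule inj_onI)
      fix x y assume xy: "x \<in> {..<c i}" "y \<in> {..<c i}" "\<tau> i x = \<tau> i y"
      then have "g i x = g i y" using \<tau>[of x i] \<tau>[of y i] by simp
      then show "x = y" using inj_onD[OF Inj_inj_on[OF g]] xy(1,2) by blast
    qed
    moreover have "\<tau> i ` {..<c i} \<subseteq> {..<c i}" using \<tau> by auto
    ultimately have "bij_betw (\<tau> i) {..<c i} {..<c i}"
      using endo_inj_surj[of "{..<c i}" "\<tau> i"] by (simp add: bij_betw_def)
    then show ?thesis by (rule bij_imp_permutes) (simp add: \<tau>_def)
  qed
  then have "\<tau> \<in> Sym c" unfolding Sym_def by simp
  moreover have "g = (\<lambda>i. f i \<circ> \<tau> i)"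
  proof (intro ext)
    fix i x
    show "g i x = (f i \<circ> \<tau> i) x"
    proof (cases "x < c i")
      case False
      then show ?thesis using f g unfolding Inj_def PiE_def extensional_def by (auto simp: \<tau>_def)
    qed (use \<tau> in simp)
  qed
  ultimately show ?thesis unfolding inj_class_def by blast
qed

definition equivariant_classes ::
    "(nat \<Rightarrow> nat) \<Rightarrow> (nat \<Rightarrow> nat \<Rightarrow> nat) set \<Rightarrow> (nat \<Rightarrow> nat) \<Rightarrow> (nat \<Rightarrow> nat \<Rightarrow> nat)
      \<Rightarrow> (nat \<Rightarrow> nat \<Rightarrow> nat) set set" where
  "equivariant_classes c \<mu> d \<sigma> = {K. \<exists>f\<in>Inj c d. K = inj_class c f \<and>
     (\<exists>\<psi>\<in>\<mu>. \<forall>i. \<forall>x<c i. \<sigma> i (f i x) = f i (\<psi> i x))}"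

definition subsets_of_cycle_type :: "nat \<Rightarrow> (nat \<Rightarrow> nat) \<Rightarrow> nat \<Rightarrow> (nat \<Rightarrow> nat) \<Rightarrow> nat set set" where
  "subsets_of_cycle_type d \<sigma> c \<rho> =
     {S. S \<subseteq> {..<d} \<and> \<sigma> ` S \<subseteq> S \<and> (\<forall>k. ncycles k S \<sigma> = ncycles k {..<c} \<rho>)}"

lemma binomX_eq_card_equivariant_classes:
  "binomX c \<mu> (d, \<sigma>) = of_nat (card (equivariant_classes c \<mu> d \<sigma>))"
  by (simp add: binomX_def equivariant_classes_def)

lemma image_mem_subsets_of_cycle_type:
  assumes f: "f \<in> Inj c d" and \<rho>: "\<rho> \<in> Sym c" and \<psi>: "\<psi> \<in> conj_class c \<rho>"
    and equiv: "\<forall>i. \<forall>x<c i. \<sigma> i (f i x) = f i (\<psi> i x)"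
  shows "f i ` {..<c i} \<in> subsets_of_cycle_type (d i) (\<sigma> i) (c i) (\<rho> i)"
proof -
  have \<psi>i: "\<psi> i ` {..<c i} \<subseteq> {..<c i}"
    using permutes_image_subset[OF ncycles_conj_class(1)[OF \<rho> \<psi>]] .
  have intertwine: "\<forall>z\<in>{..<c i}. \<sigma> i (f i z) = f i (\<psi> i z)" using equiv by simp
  then have "\<sigma> i ` f i ` {..<c i} \<subseteq> f i ` {..<c i}" using \<psi>i by auto
  moreover have "ncycles k (f i ` {..<c i}) (\<sigma> i) = ncycles k {..<c i} (\<rho> i)" for k
    using ncycles_image[OF \<psi>i Inj_inj_on[OF f] intertwine] ncycles_conj_class(2)[OF \<rho> \<psi>] by simp
  ultimately show ?thesis
    unfolding subsets_of_cycle_type_def using Inj_image_subset[OF f] by blast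
qed

lemma exists_equivariant_Inj:
  assumes c: "c \<in> obj m" and \<rho>: "\<rho> \<in> Sym c" and \<sigma>: "\<sigma> \<in> Sym d"
    and S: "S \<in> (\<Pi>\<^sub>E i\<in>{..<m}. subsets_of_cycle_type (d i) (\<sigma> i) (c i) (\<rho> i))"
  obtains f where "f \<in> Inj c d" "\<forall>i. \<forall>x<c i. \<sigma> i (f i x) = f i (\<rho> i x)"
    "\<forall>i<m. f i ` {..<c i} = S i"
proof -
  have c0: "c i = 0" if "\<not> i < m" for i using c that unfolding obj_def by simp
  have "\<forall>i\<in>{..<m}. \<exists>h. bij_betw h {..<c i} (S i) \<and> (\<forall>z\<in>{..<c i}. \<sigma> i (h z) = h (\<rho> i z))"
    (is "\<forall>i\<in>_. \<exists>h. ?intertwiner i h")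
  proof
    fix i assume i: "i \<in> {..<m}"
    have Si: "S i \<subseteq> {..<d i}" "\<sigma> i ` S i \<subseteq> S i" "\<forall>k. ncycles k {..<c i} (\<rho> i) = ncycles k (S i) (\<sigma> i)"
      using PiE_mem[OF S] i unfolding subsets_of_cycle_type_def by auto
    have \<rho>i: "\<rho> i permutes {..<c i}" and \<sigma>i: "\<sigma> i permutes {..<d i}"
      using Sym_permutes \<rho> \<sigma> by auto
    show "\<exists>h. ?intertwiner i h"
      using intertwining_bij_if_ncycles_eq[OF permutes_imp_permutation[OF _ \<rho>i]
          permutes_imp_permutation[OF _ \<sigma>i] _ permutes_image_subset[OF \<rho>i]
          finite_subset[OF Si(1)] Si(2,3)] by simp
  qed
  from bchoice[OF this] obtain H where H: "\<forall>i\<in>{..<m}. ?intertwiner i (H i)" ..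
  define f where "f i = restrict (H i) {..<c i}" for i
  have image: "f i ` {..<c i} = S i" if "i \<in> {..<m}" for i
    using H that unfolding f_def bij_betw_def by simp
  have "f i \<in> {..<c i} \<rightarrow>\<^sub>E {..<d i} \<and> inj_on (f i) {..<c i}" for i
  proof (cases "i < m")
    case True
    then have "S i \<subseteq> {..<d i}" using PiE_mem[OF S] unfolding subsets_of_cycle_type_def by auto
    then show ?thesis using image[of i] True H True unfolding f_def bij_betw_def by auto
  qed (simp add: c0 f_def restrict_def)
  then have "f \<in> Inj c d" unfolding Inj_def by blast
  moreover have "\<forall>i. \<forall>x<c i. \<sigma> i (f i x) = f i (\<rho> i x)"
  proof (intro allI impI)
    fix i x assume x: "x < c i"
    then have "i \<in> {..<m}" using c0 by fastforce
    moreover have "\<rho> i x < c i" using permutes_image_subset[OF Sym_permutes[OF \<rho>]] x by blast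
    ultimately show "\<sigma> i (f i x) = f i (\<rho> i x)" using H x unfolding f_def by simp
  qed
  ultimately show thesis using that image by blast
qed

lemma bij_betw_equivariant_classes:
  assumes c: "c \<in> obj m" and \<rho>: "\<rho> \<in> Sym c" and \<sigma>: "\<sigma> \<in> Sym d"
  shows "bij_betw (\<lambda>K. \<lambda>i\<in>{..<m}. \<Union>f\<in>K. f i ` {..<c i}) (equivariant_classes c (conj_class c \<rho>) d \<sigma>)
     (\<Pi>\<^sub>E i\<in>{..<m}. subsets_of_cycle_type (d i) (\<sigma> i) (c i) (\<rho> i))"
    (is "bij_betw ?\<Phi> ?G ?P")
proof (rule bij_betw_imageI)
  have \<Phi>: "?\<Phi> (inj_class c f) = (\<lambda>i\<in>{..<m}. f i ` {..<c i})" for f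
    using Union_image_inj_class by simp
  show "inj_on ?\<Phi> ?G"
  proof (rule inj_onI)
    fix K1 K2 assume "K1 \<in> ?G" "K2 \<in> ?G" and eq: "?\<Phi> K1 = ?\<Phi> K2"
    then obtain f1 f2 where f: "f1 \<in> Inj c d" "K1 = inj_class c f1" "f2 \<in> Inj c d" "K2 = inj_class c f2"
      unfolding equivariant_classes_def by blast
    have "f1 i ` {..<c i} = f2 i ` {..<c i}" for i
    proof (cases "i < m")
      case True
      then show ?thesis using fun_cong[OF eq, of i] \<Phi> f(2,4) by simp
    qed (use c in \<open>simp add: obj_def\<close>)
    then have "f2 \<in> inj_class c f1" using mem_inj_class_if_image_eq f(1,3) by blast
    then show "K1 = K2" using inj_class_eq f(2,4) by simp
  qed
  show "?\<Phi> ` ?G = ?P"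
  proof (intro equalityI image_subsetI subsetI)
    fix K assume "K \<in> ?G"
    then obtain f \<psi> where "f \<in> Inj c d" "K = inj_class c f" "\<psi> \<in> conj_class c \<rho>"
      "\<forall>i. \<forall>x<c i. \<sigma> i (f i x) = f i (\<psi> i x)"
      unfolding equivariant_classes_def by blast
    then show "?\<Phi> K \<in> ?P" using \<Phi> image_mem_subsets_of_cycle_type[OF _ \<rho>] by auto
  next
    fix S assume S: "S \<in> ?P"
    obtain f where f: "f \<in> Inj c d" "\<forall>i. \<forall>x<c i. \<sigma> i (f i x) = f i (\<rho> i x)"
      "\<forall>i<m. f i ` {..<c i} = S i"
      using exists_equivariant_Inj[OF c \<rho> \<sigma> S] by blast
    have "\<rho> \<in> conj_class c \<rho>"
      unfolding conj_class_def using Sym_id by (intro CollectI bexI[of _ "\<lambda>i. id"]) auto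
    then have "inj_class c f \<in> ?G" unfolding equivariant_classes_def using f(1,2) by blast
    moreover have "?\<Phi> (inj_class c f) = S"
    proof
      fix i show "?\<Phi> (inj_class c f) i = S i" using \<Phi> f(3) PiE_arb[OF S] by (cases "i < m") auto
    qed
    ultimately show "S \<in> ?\<Phi> ` ?G" by (rule rev_image_eqI[OF _ sym])
  qed
qed

lemma binomX_conj_class_eq_prod:
  assumes c: "c \<in> obj m" and \<rho>: "\<rho> \<in> Sym c" and \<sigma>: "\<sigma> \<in> Sym d"
    and N: "\<forall>i<m. c i \<le> N \<and> d i \<le> N"
  shows "binomX c (conj_class c \<rho>) (d, \<sigma>) =
    of_nat (\<Prod>i<m. \<Prod>k\<in>{1..N}. num_cycles k (d i) (\<sigma> i) choose num_cycles k (c i) (\<rho> i))"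
proof -
  have "card (equivariant_classes c (conj_class c \<rho>) d \<sigma>)
      = (\<Prod>i<m. card (subsets_of_cycle_type (d i) (\<sigma> i) (c i) (\<rho> i)))"
    using bij_betw_same_card[OF bij_betw_equivariant_classes[OF c \<rho> \<sigma>]] by (simp add: card_PiE)
  also have "\<dots> = (\<Prod>i<m. \<Prod>k\<in>{1..N}. num_cycles k (d i) (\<sigma> i) choose num_cycles k (c i) (\<rho> i))"
  proof (rule prod.cong[OF refl])
    fix i assume "i \<in> {..<m}"
    then have Ni: "c i \<le> N" "d i \<le> N" using N by auto
    have \<rho>i: "\<rho> i permutes {..<c i}" and \<sigma>i: "\<sigma> i permutes {..<d i}"
      using Sym_permutes \<rho> \<sigma> by auto
    have type: "\<forall>k. ncycles k {..<c i} (\<rho> i) \<noteq> 0 \<longrightarrow> 1 \<le> k \<and> k \<le> N"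
    proof (intro allI impI)
      fix k assume k: "ncycles k {..<c i} (\<rho> i) \<noteq> 0"
      show "1 \<le> k \<and> k \<le> N"
      proof (rule ccontr)
        assume "\<not> (1 \<le> k \<and> k \<le> N)"
        then have "k = 0 \<or> card {..<c i} < k" using Ni by auto
        then have "ncycles k {..<c i} (\<rho> i) = 0"
          by (rule ncycles_eq_0[OF permutes_imp_permutation[OF finite_lessThan \<rho>i] finite_lessThan
                permutes_image_subset[OF \<rho>i]])
        with k show False by simp
      qed
    qed
    have "card (subsets_of_cycle_type (d i) (\<sigma> i) (c i) (\<rho> i))
        = (\<Prod>k\<in>{1..N}. ncycles k {..<d i} (\<sigma> i) choose ncycles k {..<c i} (\<rho> i))"
      unfolding subsets_of_cycle_type_def
      using card_invariant_subsets_with_ncycles[OF permutes_imp_permutation[OF finite_lessThan \<sigma>i]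
          finite_lessThan permutes_image_subset[OF \<sigma>i] _ type] Ni by simp
    then show "card (subsets_of_cycle_type (d i) (\<sigma> i) (c i) (\<rho> i))
        = (\<Prod>k\<in>{1..N}. num_cycles k (d i) (\<sigma> i) choose num_cycles k (c i) (\<rho> i))"
      by (simp add: num_cycles_eq_ncycles)
  qed
  finally show ?thesis unfolding binomX_eq_card_equivariant_classes by simp
qed

section \<open>Spans relative to a domain\<close>

lemma cspan_on_superset: "A \<subseteq> cspan_on D A"
  unfolding cspan_on_def by (auto intro!: exI[of _ "{f}" for f] exI[of _ "\<lambda>_. 1"])

lemma cspan_on_cong: "f \<in> cspan_on D A \<Longrightarrow> (\<forall>p\<in>D. g p = f p) \<Longrightarrow> g \<in> cspan_on D A"
  unfolding cspan_on_def by auto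

lemma cspan_on_zero: "(\<lambda>p. 0) \<in> cspan_on D A"
  unfolding cspan_on_def by (auto intro!: exI[of _ "{}"])

lemma cspan_on_scale:
  assumes "f \<in> cspan_on D A"
  shows "(\<lambda>p. a * f p) \<in> cspan_on D A"
proof -
  obtain F c where "finite F" "F \<subseteq> A" "\<forall>p\<in>D. f p = (\<Sum>g\<in>F. c g * g p)"
    using assms unfolding cspan_on_def by blast
  then show ?thesis
    unfolding cspan_on_def
    by (auto simp: sum_distrib_left mult.assoc intro!: exI[of _ F] exI[of _ "\<lambda>g. a * c g"])
qed

lemma cspan_on_add:
  assumes "f \<in> cspan_on D A" and "g \<in> cspan_on D A"
  shows "(\<lambda>p. f p + g p) \<in> cspan_on D A"
proof -
  obtain F c where F: "finite F" "F \<subseteq> A" "\<forall>p\<in>D. f p = (\<Sum>h\<in>F. c h * h p)"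
    using assms(1) unfolding cspan_on_def by blast
  obtain G e where G: "finite G" "G \<subseteq> A" "\<forall>p\<in>D. g p = (\<Sum>h\<in>G. e h * h p)"
    using assms(2) unfolding cspan_on_def by blast
  define c' where "c' h = (if h \<in> F then c h else 0) + (if h \<in> G then e h else 0)" for h
  have extend: "(\<Sum>h\<in>H. c h * h p) = (\<Sum>h\<in>F \<union> G. (if h \<in> H then c h else 0) * h p)"
    if "H \<subseteq> F \<union> G" for H c and p :: 'a
    using F(1) G(1) that by (intro sum.mono_neutral_cong_left) auto
  have "\<forall>p\<in>D. f p + g p = (\<Sum>h\<in>F \<union> G. c' h * h p)"
    using F(3) G(3) extend[of F c] extend[of G e]
    by (simp add: c'_def distrib_right sum.distrib)
  then show ?thesis unfolding cspan_on_def using F(1,2) G(1,2) by blast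
qed

lemma cspan_on_sum:
  assumes "finite I" and "\<forall>j\<in>I. g j \<in> cspan_on D A"
  shows "(\<lambda>p. \<Sum>j\<in>I. c j * g j p) \<in> cspan_on D A"
  using assms
proof (induct I rule: finite_induct)
  case (insert j I)
  then have "(\<lambda>p. c j * g j p) \<in> cspan_on D A" "(\<lambda>p. \<Sum>j\<in>I. c j * g j p) \<in> cspan_on D A"
    by (simp_all add: cspan_on_scale)
  then show ?case using insert(1,2) by (simp add: cspan_on_add)
qed (simp add: cspan_on_zero)

lemma cspan_on_subset_iff: "cspan_on D A \<subseteq> cspan_on D B \<longleftrightarrow> A \<subseteq> cspan_on D B"
proof
  assume "A \<subseteq> cspan_on D B"
  show "cspan_on D A \<subseteq> cspan_on D B"
  proof
    fix f assume "f \<in> cspan_on D A"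
    then obtain F c where F: "finite F" "F \<subseteq> A" "\<forall>p\<in>D. f p = (\<Sum>g\<in>F. c g * g p)"
      unfolding cspan_on_def by blast
    have "\<forall>g\<in>F. g \<in> cspan_on D B" using F(2) \<open>A \<subseteq> cspan_on D B\<close> by blast
    then have "(\<lambda>p. \<Sum>g\<in>F. c g * g p) \<in> cspan_on D B"
      by (rule cspan_on_sum[OF F(1), where g = "\<lambda>g. g"])
    then show "f \<in> cspan_on D B" using F(3) by (rule cspan_on_cong)
  qed
qed (use cspan_on_superset in blast)

lemma cspan_on_mono: "A \<subseteq> B \<Longrightarrow> cspan_on D A \<subseteq> cspan_on D B"
  using cspan_on_subset_iff cspan_on_superset by blast

lemma cspan_on_mult:
  assumes "F \<in> cspan_on D A" and "\<And>f. f \<in> A \<Longrightarrow> (\<lambda>p. X p * f p) \<in> cspan_on D B"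
  shows "(\<lambda>p. X p * F p) \<in> cspan_on D B"
proof -
  obtain G c where G: "finite G" "G \<subseteq> A" "\<forall>p\<in>D. F p = (\<Sum>f\<in>G. c f * f p)"
    using assms(1) unfolding cspan_on_def by blast
  have "(\<lambda>p. \<Sum>f\<in>G. c f * (X p * f p)) \<in> cspan_on D B"
    using cspan_on_sum[OF G(1), of "\<lambda>f p. X p * f p"] G(2) assms(2) by blast
  then show ?thesis
    by (rule cspan_on_cong) (simp add: G(3) sum_distrib_left mult.left_commute)
qed

lemma cspan_on_UN_subset:
  assumes "\<And>d. d \<in> I \<Longrightarrow> cspan_on D (A d) \<subseteq> cspan_on D (B d)"
  shows "cspan_on D (\<Union>d\<in>I. A d) \<subseteq> cspan_on D (\<Union>d\<in>I. B d)"
  unfolding cspan_on_subset_iff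
proof (rule UN_least)
  fix d assume d: "d \<in> I"
  have "A d \<subseteq> cspan_on D (B d)" using assms[OF d] unfolding cspan_on_subset_iff .
  also have "\<dots> \<subseteq> cspan_on D (\<Union>d\<in>I. B d)" using d by (intro cspan_on_mono) auto
  finally show "A d \<subseteq> cspan_on D (\<Union>d\<in>I. B d)" .
qed

lemma cspan_on_UN_eq:
  assumes "\<And>d. d \<in> I \<Longrightarrow> cspan_on D (A d) = cspan_on D (B d)"
  shows "cspan_on D (\<Union>d\<in>I. A d) = cspan_on D (\<Union>d\<in>I. B d)"
  by (intro equalityI cspan_on_UN_subset) (simp_all add: assms)

section \<open>Monomials and binomial monomials in the cycle counts\<close>

definition Xnat :: "nat \<Rightarrow> nat \<Rightarrow> (nat \<Rightarrow> nat) \<times> (nat \<Rightarrow> nat \<Rightarrow> nat) \<Rightarrow> nat" where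
  "Xnat k i p = num_cycles k (fst p i) (snd p i)"

definition mono_supp :: "(nat \<Rightarrow> nat \<Rightarrow> nat) \<Rightarrow> (nat \<times> nat) set" where
  "mono_supp a = {(k, i). a k i \<noteq> 0}"

definition binom_mono :: "(nat \<Rightarrow> nat \<Rightarrow> nat) \<Rightarrow> (nat \<Rightarrow> nat) \<times> (nat \<Rightarrow> nat \<Rightarrow> nat) \<Rightarrow> complex" where
  "binom_mono t p = (\<Prod>v\<in>mono_supp t. of_nat (Xnat (fst v) (snd v) p choose t (fst v) (snd v)))"

definition binom_gens :: "nat \<Rightarrow> (nat \<Rightarrow> nat) \<Rightarrow> ((nat \<Rightarrow> nat) \<times> (nat \<Rightarrow> nat \<Rightarrow> nat) \<Rightarrow> complex) set" where
  "binom_gens m D = {binom_mono t | t. t \<in> monomials m \<and> (\<forall>i<m. mono_deg t i \<le> D i)}"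

definition incr_exp :: "(nat \<Rightarrow> nat \<Rightarrow> nat) \<Rightarrow> nat \<Rightarrow> nat \<Rightarrow> nat \<Rightarrow> nat \<Rightarrow> nat" where
  "incr_exp a k0 i0 = (\<lambda>k i. a k i + (if k = k0 \<and> i = i0 then 1 else 0))"

lemma Xfun_eq_Xnat: "Xfun k i p = of_nat (Xnat k i p)"
  by (cases p) (simp add: Xfun_def Xnat_def)

lemma mem_mono_supp_iff: "v \<in> mono_supp a \<longleftrightarrow> a (fst v) (snd v) \<noteq> 0"
  unfolding mono_supp_def by (cases v) simp

lemma finite_mono_supp: "a \<in> monomials m \<Longrightarrow> finite (mono_supp a)"
  unfolding monomials_def mono_supp_def by simp

lemma mono_fun_eq_prod:
  assumes "finite T" "mono_supp a \<subseteq> T"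
  shows "mono_fun a p = (\<Prod>v\<in>T. of_nat (Xnat (fst v) (snd v) p) ^ a (fst v) (snd v))"
  unfolding mono_fun_def Xfun_eq_Xnat
  by (rule prod.mono_neutral_left[OF assms[unfolded mono_supp_def]]) (auto intro: gr0I)

lemma binom_mono_eq_prod:
  assumes "finite T" "mono_supp t \<subseteq> T"
  shows "binom_mono t p = (\<Prod>v\<in>T. of_nat (Xnat (fst v) (snd v) p choose t (fst v) (snd v)))"
  unfolding binom_mono_def by (rule prod.mono_neutral_left[OF assms]) (simp add: mem_mono_supp_iff)

lemma mono_deg_eq_sum:
  assumes "finite K" "{k. a k i \<noteq> 0} \<subseteq> K"
  shows "mono_deg a i = (\<Sum>k\<in>K. k * a k i)"
  unfolding mono_deg_def by (rule sum.mono_neutral_left[OF assms]) simp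

lemma binom_mono_zero: "binom_mono (\<lambda>_ _. 0) = mono_fun (\<lambda>_ _. 0)"
  by (simp add: fun_eq_iff binom_mono_def mono_fun_def mono_supp_def)

lemma mono_supp_incr_exp: "mono_supp (incr_exp a k0 i0) = insert (k0, i0) (mono_supp a)"
  unfolding mono_supp_def incr_exp_def by auto

lemma incr_exp_in_monomials:
  "a \<in> monomials m \<Longrightarrow> 1 \<le> k0 \<Longrightarrow> i0 < m \<Longrightarrow> incr_exp a k0 i0 \<in> monomials m"
  using finite_mono_supp[of a m] mono_supp_incr_exp[of a k0 i0]
  unfolding monomials_def mono_supp_def incr_exp_def by auto

lemma mono_deg_incr_exp:
  assumes "a \<in> monomials m"
  shows "mono_deg (incr_exp a k0 i0) = (mono_deg a)(i0 := mono_deg a i0 + k0)"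
proof
  fix i
  let ?K = "insert k0 {k. a k i \<noteq> 0}"
  have "finite {k. a k i \<noteq> 0}"
    using finite_mono_supp[OF assms] unfolding mono_supp_def
    by (rule finite_subset[rotated, OF finite_imageI[of _ fst]]) force
  then have K: "finite ?K" by simp
  have "mono_deg (incr_exp a k0 i0) i = (\<Sum>k\<in>?K. k * a k i + (if k = k0 \<and> i = i0 then k0 else 0))"
    by (subst mono_deg_eq_sum[OF K]) (auto simp: incr_exp_def intro!: sum.cong)
  also have "\<dots> = (\<Sum>k\<in>?K. k * a k i) + (\<Sum>k\<in>?K. if k = k0 \<and> i = i0 then k0 else 0)"
    by (rule sum.distrib)
  also have "(\<Sum>k\<in>?K. k * a k i) = mono_deg a i"
    by (rule mono_deg_eq_sum[symmetric, OF K]) auto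
  also have "(\<Sum>k\<in>?K. if k = k0 \<and> i = i0 then k0 else 0) = (if i = i0 then k0 else 0)"
    using K by (cases "i = i0") (simp_all add: sum.delta)
  finally show "mono_deg (incr_exp a k0 i0) i = ((mono_deg a)(i0 := mono_deg a i0 + k0)) i"
    by simp
qed

lemma mono_fun_incr_exp:
  assumes "a \<in> monomials m"
  shows "mono_fun (incr_exp a k0 i0) p = of_nat (Xnat k0 i0 p) * mono_fun a p"
proof -
  let ?T = "insert (k0, i0) (mono_supp a)"
  let ?X = "\<lambda>v. of_nat (Xnat (fst v) (snd v) p) :: complex"
  have T: "finite ?T" using finite_mono_supp[OF assms] by simp
  have "mono_fun (incr_exp a k0 i0) p = (\<Prod>v\<in>?T. ?X v ^ incr_exp a k0 i0 (fst v) (snd v))"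
    by (rule mono_fun_eq_prod[OF T]) (simp add: mono_supp_incr_exp)
  also have "\<dots> = (\<Prod>v\<in>?T. (if v = (k0, i0) then ?X v else 1) * ?X v ^ a (fst v) (snd v))"
    by (rule prod.cong) (auto simp: incr_exp_def)
  also have "\<dots> = ?X (k0, i0) * (\<Prod>v\<in>?T. ?X v ^ a (fst v) (snd v))"
    using T by (simp add: prod.distrib prod.delta)
  also have "(\<Prod>v\<in>?T. ?X v ^ a (fst v) (snd v)) = mono_fun a p"
    by (rule mono_fun_eq_prod[symmetric, OF T]) auto
  finally show ?thesis by simp
qed

lemma of_nat_Suc_mult_choose_Suc:
  "(of_nat (Suc r) :: 'a::comm_ring_1) * of_nat (x choose Suc r) = (of_nat x - of_nat r) * of_nat (x choose r)"
proof (cases "r \<le> x")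
  case True
  have "Suc r * (x choose Suc r) = (x - r) * (x choose r)"
    using binomial_absorption[of r x] binomial_absorb_comp[of x r] by simp
  then have "(of_nat (Suc r * (x choose Suc r)) :: 'a) = of_nat ((x - r) * (x choose r))" by simp
  then show ?thesis using True by (simp add: of_nat_diff distrib_right)
qed (simp add: binomial_eq_0)

lemma binom_mono_incr_exp:
  assumes "t \<in> monomials m"
  shows "of_nat (Suc (t k0 i0)) * binom_mono (incr_exp t k0 i0) p
    = (of_nat (Xnat k0 i0 p) - of_nat (t k0 i0)) * binom_mono t p"
proof -
  let ?T = "insert (k0, i0) (mono_supp t)"
  let ?G = "\<lambda>r v. of_nat (Xnat (fst v) (snd v) p choose r) :: complex"
  let ?R = "\<Prod>v\<in>?T - {(k0, i0)}. ?G (t (fst v) (snd v)) v"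
  have T: "finite ?T" using finite_mono_supp[OF assms] by simp
  have "binom_mono (incr_exp t k0 i0) p = (\<Prod>v\<in>?T. ?G (incr_exp t k0 i0 (fst v) (snd v)) v)"
    by (rule binom_mono_eq_prod[OF T]) (simp add: mono_supp_incr_exp)
  also have "\<dots> = ?G (incr_exp t k0 i0 k0 i0) (k0, i0)
      * (\<Prod>v\<in>?T - {(k0, i0)}. ?G (incr_exp t k0 i0 (fst v) (snd v)) v)"
    using prod.remove[OF T, of "(k0, i0)" "\<lambda>v. ?G (incr_exp t k0 i0 (fst v) (snd v)) v"] by simp
  also have "(\<Prod>v\<in>?T - {(k0, i0)}. ?G (incr_exp t k0 i0 (fst v) (snd v)) v) = ?R"
    by (rule prod.cong) (auto simp: incr_exp_def)
  finally have incr: "binom_mono (incr_exp t k0 i0) p = ?G (Suc (t k0 i0)) (k0, i0) * ?R"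
    by (simp add: incr_exp_def)
  have "binom_mono t p = (\<Prod>v\<in>?T. ?G (t (fst v) (snd v)) v)"
    by (rule binom_mono_eq_prod[OF T]) auto
  also have "\<dots> = ?G (t k0 i0) (k0, i0) * ?R"
    using prod.remove[OF T, of "(k0, i0)" "\<lambda>v. ?G (t (fst v) (snd v)) v"] by simp
  finally have "binom_mono t p = ?G (t k0 i0) (k0, i0) * ?R" .
  with incr show ?thesis
    using of_nat_Suc_mult_choose_Suc[of "t k0 i0" "Xnat k0 i0 p", where 'a=complex]
    by (simp add: mult.assoc[symmetric] del: of_nat_Suc)
qed

lemma monomials_induct [consumes 1, case_names zero incr]:
  assumes a: "a \<in> monomials m"
    and zero: "P (\<lambda>_ _. 0)"
    and incr: "\<And>a k i. a \<in> monomials m \<Longrightarrow> 1 \<le> k \<Longrightarrow> i < m \<Longrightarrow> P a \<Longrightarrow> P (incr_exp a k i)"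
  shows "P a"
  using a
proof (induct "\<Sum>v\<in>mono_supp a. a (fst v) (snd v)" arbitrary: a rule: less_induct)
  case less
  show ?case
  proof (cases "mono_supp a = {}")
    case True
    then have "a = (\<lambda>_ _. 0)" unfolding mono_supp_def by (auto simp: fun_eq_iff)
    then show ?thesis using zero by simp
  next
    case False
    then obtain k0 i0 where v: "(k0, i0) \<in> mono_supp a" by auto
    then have nz: "a k0 i0 \<noteq> 0" by (simp add: mono_supp_def)
    then have ki: "1 \<le> k0" "i0 < m" using less(2) unfolding monomials_def by auto
    define a' where "a' = (\<lambda>k i. if k = k0 \<and> i = i0 then a k i - 1 else a k i)"
    have a_eq: "a = incr_exp a' k0 i0" using nz by (auto simp: fun_eq_iff incr_exp_def a'_def)
    have sub: "mono_supp a' \<subseteq> mono_supp a" unfolding mono_supp_def a'_def by auto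
    have a': "a' \<in> monomials m"
      using less(2) ki finite_subset[OF sub finite_mono_supp[OF less(2)]]
      unfolding monomials_def mono_supp_def a'_def by (auto split: if_splits)
    have fin: "finite (mono_supp a)" using finite_mono_supp[OF less(2)] .
    have "(\<Sum>v\<in>mono_supp a'. a' (fst v) (snd v)) = (\<Sum>v\<in>mono_supp a. a' (fst v) (snd v))"
      by (rule sum.mono_neutral_left[OF fin sub]) (simp add: mem_mono_supp_iff)
    also have "\<dots> < (\<Sum>v\<in>mono_supp a. a (fst v) (snd v))"
      by (rule sum_strict_mono_ex1[OF fin]) (use v nz in \<open>auto simp: a'_def intro!: bexI[of _ "(k0, i0)"]\<close>)
    finally have "P a'" using less(1) a' by blast
    then show ?thesis using incr[OF a' ki] a_eq by simp
  qed
qed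

lemma R_gens_mono: "\<forall>i<m. D i \<le> D' i \<Longrightarrow> R_gens m D \<subseteq> R_gens m D'"
  unfolding R_gens_def using order_trans by blast

lemma binom_gens_mono: "\<forall>i<m. D i \<le> D' i \<Longrightarrow> binom_gens m D \<subseteq> binom_gens m D'"
  unfolding binom_gens_def using order_trans by blast

lemma X_times_R_span:
  assumes "F \<in> cspan_on (Dom m) (R_gens m D)" and "1 \<le> k" "i < m"
  shows "(\<lambda>p. of_nat (Xnat k i p) * F p) \<in> cspan_on (Dom m) (R_gens m (D(i := D i + k)))"
  using assms(1)
proof (rule cspan_on_mult)
  fix f assume "f \<in> R_gens m D"
  then obtain a where a: "f = mono_fun a" "a \<in> monomials m" "\<forall>i<m. mono_deg a i \<le> D i"
    unfolding R_gens_def by blast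
  have "(\<lambda>p. of_nat (Xnat k i p) * f p) = mono_fun (incr_exp a k i)"
    using mono_fun_incr_exp[OF a(2)] a(1) by auto
  moreover have "incr_exp a k i \<in> monomials m" using incr_exp_in_monomials[OF a(2) assms(2,3)] .
  moreover have "\<forall>i'<m. mono_deg (incr_exp a k i) i' \<le> (D(i := D i + k)) i'"
    using a(3) mono_deg_incr_exp[OF a(2)] by simp
  ultimately have "(\<lambda>p. of_nat (Xnat k i p) * f p) \<in> R_gens m (D(i := D i + k))"
    unfolding R_gens_def by blast
  then show "(\<lambda>p. of_nat (Xnat k i p) * f p) \<in> cspan_on (Dom m) (R_gens m (D(i := D i + k)))"
    by (rule cspan_on_superset[THEN subsetD])
qed

lemma X_times_binom_span:
  assumes "F \<in> cspan_on (Dom m) (binom_gens m D)" and "1 \<le> k" "i < m"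
  shows "(\<lambda>p. of_nat (Xnat k i p) * F p) \<in> cspan_on (Dom m) (binom_gens m (D(i := D i + k)))"
  using assms(1)
proof (rule cspan_on_mult)
  let ?B = "binom_gens m (D(i := D i + k))"
  fix f assume "f \<in> binom_gens m D"
  then obtain t where t: "f = binom_mono t" "t \<in> monomials m" "\<forall>i<m. mono_deg t i \<le> D i"
    unfolding binom_gens_def by blast
  have "\<forall>i'<m. mono_deg (incr_exp t k i) i' \<le> (D(i := D i + k)) i'"
    using t(3) mono_deg_incr_exp[OF t(2)] by simp
  then have "binom_mono (incr_exp t k i) \<in> ?B"
    using incr_exp_in_monomials[OF t(2) assms(2,3)] unfolding binom_gens_def by blast
  moreover have "\<forall>i'<m. mono_deg t i' \<le> (D(i := D i + k)) i'" using t(3) by (auto intro: trans_le_add1)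
  then have "binom_mono t \<in> ?B" using t(2) unfolding binom_gens_def by blast
  ultimately have "(\<lambda>p. of_nat (Suc (t k i)) * binom_mono (incr_exp t k i) p + of_nat (t k i) * binom_mono t p)
      \<in> cspan_on (Dom m) ?B"
    by (intro cspan_on_add cspan_on_scale cspan_on_superset[THEN subsetD])
  then show "(\<lambda>p. of_nat (Xnat k i p) * f p) \<in> cspan_on (Dom m) ?B"
  proof (rule cspan_on_cong, intro ballI)
    fix p
    have "of_nat (Xnat k i p) * f p = (of_nat (Xnat k i p) - of_nat (t k i)) * binom_mono t p
        + of_nat (t k i) * binom_mono t p"
      unfolding t(1) by (simp add: algebra_simps)
    also have "\<dots> = of_nat (Suc (t k i)) * binom_mono (incr_exp t k i) p + of_nat (t k i) * binom_mono t p"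
      unfolding binom_mono_incr_exp[OF t(2)] ..
    finally show "of_nat (Xnat k i p) * f p
        = of_nat (Suc (t k i)) * binom_mono (incr_exp t k i) p + of_nat (t k i) * binom_mono t p" .
  qed
qed

lemma zero_in_monomials: "(\<lambda>_ _. 0) \<in> monomials m"
  by (simp add: monomials_def)

lemma binom_mono_in_R_span:
  "t \<in> monomials m \<Longrightarrow> binom_mono t \<in> cspan_on (Dom m) (R_gens m (mono_deg t))"
proof (induct t rule: monomials_induct)
  case zero
  have "mono_fun (\<lambda>_ _. 0) \<in> R_gens m (mono_deg (\<lambda>_ _. 0))"
    unfolding R_gens_def using zero_in_monomials by auto
  then show ?case using cspan_on_superset unfolding binom_mono_zero by blast
next
  case (incr t k i)
  let ?S = "cspan_on (Dom m) (R_gens m (mono_deg (incr_exp t k i)))"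
  have deg: "mono_deg (incr_exp t k i) = (mono_deg t)(i := mono_deg t i + k)"
    by (rule mono_deg_incr_exp[OF incr(1)])
  have "(\<lambda>p. of_nat (Xnat k i p) * binom_mono t p) \<in> ?S"
    unfolding deg by (rule X_times_R_span[OF incr(4,2,3)])
  moreover have "R_gens m (mono_deg t) \<subseteq> R_gens m (mono_deg (incr_exp t k i))"
    unfolding deg by (rule R_gens_mono) simp
  then have "binom_mono t \<in> ?S" using incr(4) cspan_on_mono by blast
  ultimately have "(\<lambda>p. (1 / of_nat (Suc (t k i))) * (of_nat (Xnat k i p) * binom_mono t p)
      + (- of_nat (t k i) / of_nat (Suc (t k i))) * binom_mono t p) \<in> ?S"
    by (intro cspan_on_add cspan_on_scale)
  then show ?case
  proof (rule cspan_on_cong, intro ballI)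
    fix p
    have "of_nat (Suc (t k i)) \<noteq> (0 :: complex)" by (simp del: of_nat_Suc)
    then show "binom_mono (incr_exp t k i) p = 1 / of_nat (Suc (t k i)) * (of_nat (Xnat k i p) * binom_mono t p)
        + - of_nat (t k i) / of_nat (Suc (t k i)) * binom_mono t p"
      using binom_mono_incr_exp[OF incr(1), of k i p]
      by (simp add: field_simps del: of_nat_Suc)
  qed
qed

lemma mono_fun_in_binom_span:
  "a \<in> monomials m \<Longrightarrow> mono_fun a \<in> cspan_on (Dom m) (binom_gens m (mono_deg a))"
proof (induct a rule: monomials_induct)
  case zero
  have "binom_mono (\<lambda>_ _. 0) \<in> binom_gens m (mono_deg (\<lambda>_ _. 0))"
    unfolding binom_gens_def using zero_in_monomials by auto
  then show ?case using cspan_on_superset unfolding binom_mono_zero by blast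
next
  case (incr a k i)
  have "(\<lambda>p. of_nat (Xnat k i p) * mono_fun a p)
      \<in> cspan_on (Dom m) (binom_gens m ((mono_deg a)(i := mono_deg a i + k)))"
    by (rule X_times_binom_span[OF incr(4,2,3)])
  moreover have "mono_fun (incr_exp a k i) = (\<lambda>p. of_nat (Xnat k i p) * mono_fun a p)"
    by (intro ext mono_fun_incr_exp[OF incr(1)])
  ultimately show ?case by (simp only: mono_deg_incr_exp[OF incr(1)])
qed

lemma cspan_binom_gens_eq_cspan_R_gens:
  "cspan_on (Dom m) (binom_gens m D) = cspan_on (Dom m) (R_gens m D)"
proof (intro equalityI)
  have "binom_mono t \<in> cspan_on (Dom m) (R_gens m D)"
    if "t \<in> monomials m" "\<forall>i<m. mono_deg t i \<le> D i" for t
    using binom_mono_in_R_span[OF that(1)] cspan_on_mono[OF R_gens_mono[OF that(2)]] by blast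
  then show "cspan_on (Dom m) (binom_gens m D) \<subseteq> cspan_on (Dom m) (R_gens m D)"
    unfolding cspan_on_subset_iff binom_gens_def by blast
  have "mono_fun a \<in> cspan_on (Dom m) (binom_gens m D)"
    if "a \<in> monomials m" "\<forall>i<m. mono_deg a i \<le> D i" for a
    using mono_fun_in_binom_span[OF that(1)] cspan_on_mono[OF binom_gens_mono[OF that(2)]] by blast
  then show "cspan_on (Dom m) (R_gens m D) \<subseteq> cspan_on (Dom m) (binom_gens m D)"
    unfolding cspan_on_subset_iff R_gens_def by blast
qed

section \<open>Binomial monomials as character polynomials\<close>

definition cycle_type :: "(nat \<Rightarrow> nat) \<Rightarrow> (nat \<Rightarrow> nat \<Rightarrow> nat) \<Rightarrow> nat \<Rightarrow> nat \<Rightarrow> nat" where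
  "cycle_type c \<rho> = (\<lambda>k i. num_cycles k (c i) (\<rho> i))"

lemma obj_eq_0: "c \<in> obj m \<Longrightarrow> \<not> i < m \<Longrightarrow> c i = 0"
  unfolding obj_def by simp

lemma num_cycles_eq_0:
  assumes "\<rho> permutes {..<n}" and "k = 0 \<or> n < k"
  shows "num_cycles k n \<rho> = 0"
  unfolding num_cycles_eq_ncycles
  using assms by (intro ncycles_eq_0[OF permutes_imp_permutation[OF _ assms(1)]]
      finite_lessThan permutes_image_subset) auto

lemma cycle_type_nonzero:
  assumes c: "c \<in> obj m" and \<rho>: "\<rho> \<in> Sym c" and nz: "cycle_type c \<rho> k i \<noteq> 0"
  shows "1 \<le> k \<and> k \<le> c i \<and> i < m"
proof -
  have k: "1 \<le> k \<and> k \<le> c i"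
  proof (rule ccontr)
    assume "\<not> (1 \<le> k \<and> k \<le> c i)"
    then have "k = 0 \<or> c i < k" by auto
    then have "cycle_type c \<rho> k i = 0"
      unfolding cycle_type_def by (rule num_cycles_eq_0[OF Sym_permutes[OF \<rho>]])
    with nz show False by simp
  qed
  moreover have "i < m" using k obj_eq_0[OF c, of i] by (cases "i < m") auto
  ultimately show ?thesis by simp
qed

lemma cycle_type_in_monomials:
  assumes c: "c \<in> obj m" and \<rho>: "\<rho> \<in> Sym c"
  shows "cycle_type c \<rho> \<in> monomials m"
proof -
  have "c i \<le> (\<Sum>i<m. c i)" if "i < m" for i using that by (intro member_le_sum) auto
  then have "{(k, i). cycle_type c \<rho> k i \<noteq> 0} \<subseteq> {1..(\<Sum>i<m. c i)} \<times> {..<m}"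
    using cycle_type_nonzero[OF c \<rho>] by fastforce
  then show ?thesis
    unfolding monomials_def using cycle_type_nonzero[OF c \<rho>] finite_subset by blast
qed

lemma mono_deg_cycle_type:
  assumes c: "c \<in> obj m" and \<rho>: "\<rho> \<in> Sym c"
  shows "mono_deg (cycle_type c \<rho>) = c"
proof
  fix i
  have \<rho>i: "\<rho> i permutes {..<c i}" using Sym_permutes[OF \<rho>] .
  have "{k. cycle_type c \<rho> k i \<noteq> 0} \<subseteq> {1..c i}"
    using cycle_type_nonzero[OF c \<rho>] by auto
  from mono_deg_eq_sum[of "{1..c i}" "cycle_type c \<rho>" i, OF finite_atLeastAtMost this]
  have "mono_deg (cycle_type c \<rho>) i = (\<Sum>k\<in>{1..c i}. k * ncycles k {..<c i} (\<rho> i))"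
    by (simp add: cycle_type_def num_cycles_eq_ncycles)
  also have "\<dots> = c i"
    using sum_ncycles[OF permutes_imp_permutation[OF _ \<rho>i] finite_lessThan permutes_image_subset[OF \<rho>i]]
    by simp
  finally show "mono_deg (cycle_type c \<rho>) i = c i" .
qed

lemma binomX_eq_binom_mono_cycle_type:
  assumes c: "c \<in> obj m" and \<rho>: "\<rho> \<in> Sym c" and p: "p \<in> Dom m"
  shows "binomX c (conj_class c \<rho>) p = binom_mono (cycle_type c \<rho>) p"
proof -
  obtain d \<sigma> where p_eq: "p = (d, \<sigma>)" and \<sigma>: "\<sigma> \<in> Sym d" using p unfolding Dom_def by auto
  define N where "N = (\<Sum>i<m. c i + d i)"
  have "c i + d i \<le> N" if "i < m" for i unfolding N_def using that by (intro member_le_sum) auto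
  then have N: "\<forall>i<m. c i \<le> N \<and> d i \<le> N" by fastforce
  have supp: "mono_supp (cycle_type c \<rho>) \<subseteq> {1..N} \<times> {..<m}"
    unfolding mono_supp_def using cycle_type_nonzero[OF c \<rho>] N by fastforce
  have "binomX c (conj_class c \<rho>) p
      = (\<Prod>i<m. \<Prod>k\<in>{1..N}. of_nat (num_cycles k (d i) (\<sigma> i) choose num_cycles k (c i) (\<rho> i)))"
    using binomX_conj_class_eq_prod[OF c \<rho> \<sigma> N] p_eq by simp
  also have "\<dots> = (\<Prod>v\<in>{1..N} \<times> {..<m}. of_nat (Xnat (fst v) (snd v) p choose cycle_type c \<rho> (fst v) (snd v)))"
    by (subst prod.swap) (simp add: prod.cartesian_product case_prod_beta p_eq Xnat_def cycle_type_def)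
  also have "\<dots> = binom_mono (cycle_type c \<rho>) p"
    by (rule binom_mono_eq_prod[symmetric, OF _ supp]) simp
  finally show ?thesis .
qed

lemma exists_cycle_type:
  assumes t: "t \<in> monomials m"
  obtains c \<rho> where "c \<in> obj m" "\<rho> \<in> Sym c" "cycle_type c \<rho> = t"
proof -
  define N where "N = (\<Sum>v\<in>mono_supp t. fst v)"
  have t_nz: "1 \<le> k \<and> k \<le> N \<and> i < m" if "t k i \<noteq> 0" for k i
    using t that member_le_sum[of "(k, i)" "mono_supp t" fst] finite_mono_supp[OF t]
    unfolding monomials_def N_def mono_supp_def by auto
  have "\<forall>i. \<exists>q. snd q permutes {..<fst q} \<and> (\<forall>k. ncycles k {..<fst q} (snd q) = t k i)"
    using exists_permutation_with_ncycles[of "\<lambda>k. t k i" N for i] t_nz by fastforce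
  then obtain Q where Q: "\<And>i. snd (Q i) permutes {..<fst (Q i)}"
    "\<And>i k. ncycles k {..<fst (Q i)} (snd (Q i)) = t k i"
    by metis
  define c where "c i = (if i < m then fst (Q i) else 0)" for i
  define \<rho> where "\<rho> i = (if i < m then snd (Q i) else id)" for i
  have "c \<in> obj m" unfolding obj_def c_def by simp
  moreover have "\<rho> \<in> Sym c" unfolding Sym_def c_def \<rho>_def using Q(1) by (simp add: permutes_id)
  moreover have "cycle_type c \<rho> = t"
    using Q(2) t_nz by (force simp: fun_eq_iff cycle_type_def c_def \<rho>_def num_cycles_eq_ncycles)
  ultimately show thesis using that by blast
qed

lemma cspan_CP_gens_eq_cspan_binom_gens:
  "cspan_on (Dom m) (CP_gens m D) = cspan_on (Dom m) (binom_gens m D)"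
proof (intro equalityI)
  show "cspan_on (Dom m) (CP_gens m D) \<subseteq> cspan_on (Dom m) (binom_gens m D)"
    unfolding cspan_on_subset_iff
  proof
    fix f assume "f \<in> CP_gens m D"
    then obtain c \<rho> where f: "f = binomX c (conj_class c \<rho>)" "c \<in> obj m" "\<rho> \<in> Sym c" "\<forall>i. c i \<le> D i"
      unfolding CP_gens_def conj_classes_def by blast
    then have "binom_mono (cycle_type c \<rho>) \<in> binom_gens m D"
      using cycle_type_in_monomials[OF f(2,3)] mono_deg_cycle_type[OF f(2,3)]
      unfolding binom_gens_def by auto
    then have "binom_mono (cycle_type c \<rho>) \<in> cspan_on (Dom m) (binom_gens m D)"
      by (rule cspan_on_superset[THEN subsetD])
    then show "f \<in> cspan_on (Dom m) (binom_gens m D)"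
      by (rule cspan_on_cong) (simp add: f(1) binomX_eq_binom_mono_cycle_type[OF f(2,3)])
  qed
  show "cspan_on (Dom m) (binom_gens m D) \<subseteq> cspan_on (Dom m) (CP_gens m D)"
    unfolding cspan_on_subset_iff
  proof
    fix f assume "f \<in> binom_gens m D"
    then obtain t where t: "f = binom_mono t" "t \<in> monomials m" "\<forall>i<m. mono_deg t i \<le> D i"
      unfolding binom_gens_def by blast
    obtain c \<rho> where c\<rho>: "c \<in> obj m" "\<rho> \<in> Sym c" "cycle_type c \<rho> = t"
      using exists_cycle_type[OF t(2)] .
    then have "\<forall>i. c i \<le> D i"
      using t(3) mono_deg_cycle_type obj_eq_0 by (metis zero_le)
    then have "binomX c (conj_class c \<rho>) \<in> CP_gens m D"
      using c\<rho> unfolding CP_gens_def conj_classes_def by blast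
    then have "binomX c (conj_class c \<rho>) \<in> cspan_on (Dom m) (CP_gens m D)"
      by (rule cspan_on_superset[THEN subsetD])
    then show "f \<in> cspan_on (Dom m) (CP_gens m D)"
      by (rule cspan_on_cong) (simp add: t(1) c\<rho>(3)[symmetric] binomX_eq_binom_mono_cycle_type[OF c\<rho>(1,2)])
  qed
qed

section \<open>Linear independence of the monomials\<close>

lemma coeffs_eq_0_if_vanishes_on_nat:
  fixes q :: "nat \<Rightarrow> 'a::{idom, ring_char_0}"
  assumes E: "finite E" and zero: "\<And>y::nat. (\<Sum>j\<in>E. q j * of_nat y ^ j) = 0" and j: "j \<in> E"
  shows "q j = 0"
proof -
  define P where "P = (\<Sum>j\<in>E. monom (q j) j)"
  have "poly P (of_nat y) = 0" for y
    using zero unfolding P_def by (simp add: poly_sum poly_monom)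
  then have "range (of_nat :: nat \<Rightarrow> 'a) \<subseteq> {z. poly P z = 0}" by auto
  moreover have "infinite (range (of_nat :: nat \<Rightarrow> 'a))"
    by (rule range_inj_infinite) (rule inj_of_nat)
  ultimately have "P = 0" using poly_roots_finite finite_subset by blast
  moreover have "coeff P j = q j"
    unfolding P_def using E j by (simp add: coeff_sum coeff_monom if_distrib sum.delta' cong: if_cong)
  ultimately show ?thesis by simp
qed

lemma sum_collect_powers:
  fixes z :: "'a::comm_semiring_1"
  assumes "finite F"
  shows "(\<Sum>b\<in>F. c b * (z ^ f b * q b)) = (\<Sum>j\<in>f ` F. (\<Sum>b\<in>{b\<in>F. f b = j}. c b * q b) * z ^ j)"
proof -
  have "(\<Sum>b\<in>F. c b * (z ^ f b * q b)) = (\<Sum>j\<in>f ` F. \<Sum>b\<in>{b\<in>F. f b = j}. c b * (z ^ f b * q b))"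
    by (rule sum.image_gen[OF assms])
  also have "\<dots> = (\<Sum>j\<in>f ` F. (\<Sum>b\<in>{b\<in>F. f b = j}. c b * q b) * z ^ j)"
  proof (rule sum.cong[OF refl])
    fix j
    have "(\<Sum>b\<in>{b\<in>F. f b = j}. c b * (z ^ f b * q b)) = (\<Sum>b\<in>{b\<in>F. f b = j}. c b * q b * z ^ j)"
      by (rule sum.cong) (auto simp: algebra_simps)
    then show "(\<Sum>b\<in>{b\<in>F. f b = j}. c b * (z ^ f b * q b)) = (\<Sum>b\<in>{b\<in>F. f b = j}. c b * q b) * z ^ j"
      by (simp add: sum_distrib_right)
  qed
  finally show ?thesis .
qed

lemma coeffs_eq_0_if_monomials_vanish_on_nat:
  fixes e :: "'b \<Rightarrow> 'v \<Rightarrow> nat" and c :: "'b \<Rightarrow> 'a::{idom, ring_char_0}"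
  assumes "finite V" "finite F" "inj_on (\<lambda>a. restrict (e a) V) F"
    and "\<And>x. (\<Sum>a\<in>F. c a * (\<Prod>v\<in>V. of_nat (x v) ^ e a v)) = 0" and "a \<in> F"
  shows "c a = 0"
  using assms
proof (induct V arbitrary: F a rule: finite_induct)
  case empty
  then have "F = {a}" by (auto simp: inj_on_def restrict_def)
  then show ?case using empty(3) by simp
next
  case (insert w V)
  define Q where "Q x b = (\<Prod>v\<in>V. of_nat (x v) ^ e b v :: 'a)" for x b
  define Fj where "Fj j = {b\<in>F. e b w = j}" for j
  have split: "(\<Prod>v\<in>insert w V. of_nat ((x(w := y)) v) ^ e b v :: 'a) = of_nat y ^ e b w * Q x b"
    for x y b
  proof -
    have "(\<Prod>v\<in>V. of_nat ((x(w := y)) v) ^ e b v :: 'a) = Q x b"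
      unfolding Q_def using insert(2) by (intro prod.cong) auto
    then show ?thesis using insert(1,2) by simp
  qed
  have inner: "(\<Sum>b\<in>Fj j. c b * Q x b) = 0" if "j \<in> (\<lambda>b. e b w) ` F" for j x
  proof (rule coeffs_eq_0_if_vanishes_on_nat[OF finite_imageI[OF insert(4)] _ that])
    fix y :: nat
    have "0 = (\<Sum>b\<in>F. c b * (\<Prod>v\<in>insert w V. of_nat ((x(w := y)) v) ^ e b v))"
      using insert(6)[of "x(w := y)"] by (simp only: eq_commute)
    also have "\<dots> = (\<Sum>j\<in>(\<lambda>b. e b w) ` F. (\<Sum>b\<in>Fj j. c b * Q x b) * of_nat y ^ j)"
      unfolding split Fj_def by (rule sum_collect_powers[OF insert(4)])
    finally show "(\<Sum>j\<in>(\<lambda>b. e b w) ` F. (\<Sum>b\<in>Fj j. c b * Q x b) * of_nat y ^ j) = 0" ..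
  qed
  have inj: "inj_on (\<lambda>b. restrict (e b) V) (Fj (e a w))"
  proof (rule inj_onI)
    fix b1 b2 assume b: "b1 \<in> Fj (e a w)" "b2 \<in> Fj (e a w)" "restrict (e b1) V = restrict (e b2) V"
    then have "restrict (e b1) (insert w V) = restrict (e b2) (insert w V)"
      unfolding Fj_def by (auto simp: fun_eq_iff restrict_def) (metis)
    then show "b1 = b2" using b(1,2) insert(5) unfolding Fj_def inj_on_def by blast
  qed
  show "c a = 0"
  proof (rule insert(3)[OF _ inj])
    show "finite (Fj (e a w))" using insert(4) by (simp add: Fj_def)
    show "(\<Sum>b\<in>Fj (e a w). c b * (\<Prod>v\<in>V. of_nat (x v) ^ e b v)) = 0" for x
      using inner[of "e a w" x] insert(7) unfolding Q_def by simp
    show "a \<in> Fj (e a w)" using insert(7) by (simp add: Fj_def)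
  qed
qed

lemma exists_point_with_Xnat:
  assumes V: "finite V" "\<And>k i. (k, i) \<in> V \<Longrightarrow> 1 \<le> k \<and> i < m"
  obtains p where "p \<in> Dom m" "\<And>k i. (k, i) \<in> V \<Longrightarrow> Xnat k i p = x (k, i)"
proof -
  define t where "t k i = (if (k, i) \<in> V then x (k, i) else 0)" for k i
  have "{(k, i). t k i \<noteq> 0} \<subseteq> V" unfolding t_def by auto
  then have "t \<in> monomials m"
    unfolding monomials_def using finite_subset[OF _ V(1)] V(2) by (auto simp: t_def split: if_splits)
  then obtain c \<rho> where c\<rho>: "c \<in> obj m" "\<rho> \<in> Sym c" "cycle_type c \<rho> = t"
    by (rule exists_cycle_type)
  show thesis
  proof
    show "(c, \<rho>) \<in> Dom m" unfolding Dom_def using c\<rho> by simp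
    show "Xnat k i (c, \<rho>) = x (k, i)" if "(k, i) \<in> V" for k i
      using c\<rho>(3) that by (auto simp: Xnat_def t_def cycle_type_def fun_eq_iff)
  qed
qed

lemma mono_fun_linearly_independent:
  assumes F: "finite F" "F \<subseteq> monomials m"
    and zero: "\<forall>p\<in>Dom m. (\<Sum>a\<in>F. c a * mono_fun a p) = 0" and a: "a \<in> F"
  shows "c a = 0"
proof -
  define V where "V = (\<Union>a\<in>F. mono_supp a)"
  define e where "e a v = a (fst v) (snd v)" for a :: "nat \<Rightarrow> nat \<Rightarrow> nat" and v :: "nat \<times> nat"
  have V: "finite V" unfolding V_def using F finite_mono_supp by blast
  have supp_V: "mono_supp a \<subseteq> V" if "a \<in> F" for a unfolding V_def using that by blast
  have "inj_on (\<lambda>a. restrict (e a) V) F"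
  proof (rule inj_onI)
    fix a b assume ab: "a \<in> F" "b \<in> F" "restrict (e a) V = restrict (e b) V"
    have "a k i = b k i" for k i
    proof (cases "(k, i) \<in> V")
      case True
      then show ?thesis using fun_cong[OF ab(3), of "(k, i)"] unfolding e_def by simp
    next
      case False
      then have "(k, i) \<notin> mono_supp a" "(k, i) \<notin> mono_supp b"
        using supp_V[OF ab(1)] supp_V[OF ab(2)] by auto
      then show ?thesis by (simp add: mem_mono_supp_iff)
    qed
    then show "a = b" by blast
  qed
  moreover have "(\<Sum>a\<in>F. c a * (\<Prod>v\<in>V. of_nat (x v) ^ e a v)) = 0" for x :: "nat \<times> nat \<Rightarrow> nat"
  proof -
    have "1 \<le> k \<and> i < m" if ki: "(k, i) \<in> V" for k i
    proof -
      obtain a where "a \<in> F" "a k i \<noteq> 0" using ki unfolding V_def mono_supp_def by auto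
      then show ?thesis using F(2) unfolding monomials_def by blast
    qed
    then obtain p where p: "p \<in> Dom m" "\<And>k i. (k, i) \<in> V \<Longrightarrow> Xnat k i p = x (k, i)"
      using exists_point_with_Xnat[OF V] by blast
    have mono: "mono_fun a p = (\<Prod>v\<in>V. of_nat (x v) ^ e a v)" if "a \<in> F" for a
      unfolding mono_fun_eq_prod[OF V supp_V[OF that]] e_def using p(2) by (auto intro!: prod.cong)
    have "(\<Sum>a\<in>F. c a * mono_fun a p) = 0" using zero p(1) by blast
    then show ?thesis using mono by (simp cong: sum.cong)
  qed
  ultimately show ?thesis
    using coeffs_eq_0_if_monomials_vanish_on_nat[OF V F(1)] a by blast
qed

lemma CP_all_gens_eq_UN: "CP_all_gens m = (\<Union>d\<in>obj m. CP_gens m d)"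
  unfolding CP_all_gens_def CP_gens_def by blast

lemma R_all_gens_eq_UN: "R_all_gens m = (\<Union>d\<in>obj m. R_gens m d)"
proof -
  have "mono_deg a \<in> obj m" if a: "a \<in> monomials m" for a
  proof -
    have "{k. a k i \<noteq> 0} = {}" if "\<not> i < m" for i using a that unfolding monomials_def by auto
    then show ?thesis unfolding obj_def mono_deg_def by auto
  qed
  then show ?thesis unfolding R_all_gens_def R_gens_def by blast
qed

theorem mainTheorem19:
  fixes m :: nat
  assumes "m \<ge> 1"
  shows "(\<forall>F c. finite F \<and> F \<subseteq> monomials m \<and>
            (\<forall>p\<in>Dom m. (\<Sum>a\<in>F. c a * mono_fun a p) = 0) \<longrightarrow> (\<forall>a\<in>F. c a = 0))
       \<and> cspan_on (Dom m) (CP_all_gens m) = cspan_on (Dom m) (R_all_gens m)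
       \<and> (\<forall>d\<in>obj m. cspan_on (Dom m) (CP_gens m d) = cspan_on (Dom m) (R_gens m d))"
proof -
  have filtered: "cspan_on (Dom m) (CP_gens m d) = cspan_on (Dom m) (R_gens m d)" for d
    using cspan_CP_gens_eq_cspan_binom_gens cspan_binom_gens_eq_cspan_R_gens by simp
  then have "cspan_on (Dom m) (CP_all_gens m) = cspan_on (Dom m) (R_all_gens m)"
    unfolding CP_all_gens_eq_UN R_all_gens_eq_UN by (rule cspan_on_UN_eq)
  then show ?thesis using mono_fun_linearly_independent filtered by blast
qed

end
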